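(* Let $(k,|\cdot|)$ be a complete non-Archimedean field of characteristic $p>0$ with nontrivial value group. For every $n>0$ the convergent power series ring $K_n(k)$ is Frobenius split in each of the following cases: (i) $(k,|\cdot|)$ is spherically complete; (ii) $k^{1/p}$ has a dense $k$-subspace having a countable $k$-basis (in particular if $[k^{1/p}:k]<\infty$); (iii) $|k^\times|$ is not discrete and the norm on $k^{1/p}$ is polar.
   Context: $K_n(k)$ is the subring of $k[[X_1,\dots,X_n]]$ of series $\sum_\nu a_\nu X^\nu$ for which there exist $r_1,\dots,r_n,M>0$ with $|a_\nu|r_1^{\nu_1}\cdots r_n^{\nu_n}\le M$ for all $\nu$. A ring $R$ of characteristic $p$ is Frobenius split if there is an $R$-linear $\phi\colon F_{R*}R\to R$ with $\phi(1)=1$, where $F_{R*}R$ is $R$ with $r\cdot x=r^px$. $k$ is spherically complete if every decreasing sequence of closed disks in $k$ has nonempty intersection. $k^{1/p}$ carries the unique absolute value extending that of $k$. A norm $\|\cdot\|$ on a normed $k$-space $E$ is polar if for every $x$ with $\|x\|>1$ there is a linear functional $f\colon E\to k$ with $|f(y)|\le 1$ whenever $\|y\|\le1$ and $|f(x)|>1$. *)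

theory Defs
  imports Complex_Main "HOL-Library.Countable_Set"
begin

definition nonarch_abs :: "('a::field \<Rightarrow> real) \<Rightarrow> bool" where
  "nonarch_abs v \<longleftrightarrow>
     (\<forall>x. 0 \<le> v x) \<and> (\<forall>x. v x = 0 \<longleftrightarrow> x = 0) \<and>
     (\<forall>x y. v (x * y) = v x * v y) \<and>
     (\<forall>x y. v (x + y) \<le> max (v x) (v y))"

definition abs_complete :: "('a::field \<Rightarrow> real) \<Rightarrow> bool" where
  "abs_complete v \<longleftrightarrow>
     (\<forall>s::nat \<Rightarrow> 'a.
        (\<forall>e>0. \<exists>N. \<forall>m\<ge>N. \<forall>n\<ge>N. v (s m - s n) < e) \<longrightarrow>
        (\<exists>l. \<forall>e>0. \<exists>N. \<forall>n\<ge>N. v (s n - l) < e))"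

definition nontrivial_value_group :: "('a::field \<Rightarrow> real) \<Rightarrow> bool" where
  "nontrivial_value_group v \<longleftrightarrow> (\<exists>x. x \<noteq> 0 \<and> v x \<noteq> 1)"

text \<open>The value group \<open>|k^\<times>|\<close> (a subgroup of the positive reals) is discrete
  iff 1 is an isolated point of it.\<close>
definition discrete_value_group :: "('a::field \<Rightarrow> real) \<Rightarrow> bool" where
  "discrete_value_group v \<longleftrightarrow>
     (\<exists>e>0. \<forall>x. x \<noteq> 0 \<and> v x \<noteq> 1 \<longrightarrow> \<bar>v x - 1\<bar> \<ge> e)"

definition closed_disk :: "('a::field \<Rightarrow> real) \<Rightarrow> 'a \<Rightarrow> real \<Rightarrow> 'a set" where
  "closed_disk v c r = {x. v (x - c) \<le> r}"

definition spherically_complete :: "('a::field \<Rightarrow> real) \<Rightarrow> bool" where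
  "spherically_complete v \<longleftrightarrow>
     (\<forall>(c::nat \<Rightarrow> 'a) (r::nat \<Rightarrow> real).
        (\<forall>n. r n > 0) \<and>
        (\<forall>n. closed_disk v (c (Suc n)) (r (Suc n)) \<subseteq> closed_disk v (c n) (r n)) \<longrightarrow>
        (\<Inter>n. closed_disk v (c n) (r n)) \<noteq> {})"

text \<open>\<open>k^{1/p}\<close> is identified with \<open>k\<close> via the field isomorphism
  \<open>k^{1/p} \<rightarrow> k, y \<mapsto> y^p\<close>.  Transported along it, the inclusion \<open>k \<subseteq> k^{1/p}\<close>
  becomes the scalar action \<open>a \<cdot> x = a^p x\<close>, and the unique extension of the
  absolute value, \<open>|y| = |y^p|^{1/p}\<close>, becomes \<open>\<parallel>x\<parallel> = |x|^{1/p}\<close>.\<close>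

definition rp_smul :: "nat \<Rightarrow> 'a::field \<Rightarrow> 'a \<Rightarrow> 'a" where
  "rp_smul p a x = a ^ p * x"

definition rp_norm :: "('a::field \<Rightarrow> real) \<Rightarrow> nat \<Rightarrow> 'a \<Rightarrow> real" where
  "rp_norm v p x = v x powr (1 / real p)"

definition rp_subspace :: "nat \<Rightarrow> 'a::field set \<Rightarrow> bool" where
  "rp_subspace p V \<longleftrightarrow> 0 \<in> V \<and> (\<forall>x\<in>V. \<forall>y\<in>V. x + y \<in> V) \<and>
     (\<forall>a. \<forall>x\<in>V. rp_smul p a x \<in> V)"

definition rp_dense :: "('a::field \<Rightarrow> real) \<Rightarrow> nat \<Rightarrow> 'a set \<Rightarrow> bool" where
  "rp_dense v p V \<longleftrightarrow> (\<forall>x. \<forall>e>0. \<exists>y\<in>V. rp_norm v p (x - y) < e)"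

definition rp_basis :: "nat \<Rightarrow> 'a::field set \<Rightarrow> 'a set \<Rightarrow> bool" where
  "rp_basis p V B \<longleftrightarrow> B \<subseteq> V \<and>
     (\<forall>S c. finite S \<and> S \<subseteq> B \<and> (\<Sum>b\<in>S. rp_smul p (c b) b) = 0 \<longrightarrow> (\<forall>b\<in>S. c b = 0)) \<and>
     (\<forall>x\<in>V. \<exists>S c. finite S \<and> S \<subseteq> B \<and> x = (\<Sum>b\<in>S. rp_smul p (c b) b))"

definition rp_dense_countable_basis :: "('a::field \<Rightarrow> real) \<Rightarrow> nat \<Rightarrow> bool" where
  "rp_dense_countable_basis v p \<longleftrightarrow>
     (\<exists>V B. rp_subspace p V \<and> rp_dense v p V \<and> rp_basis p V B \<and> countable B)"

definition rp_polar :: "('a::field \<Rightarrow> real) \<Rightarrow> nat \<Rightarrow> bool" where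
  "rp_polar v p \<longleftrightarrow>
     (\<forall>x. rp_norm v p x > 1 \<longrightarrow>
        (\<exists>f::'a \<Rightarrow> 'a.
           (\<forall>y z. f (y + z) = f y + f z) \<and> (\<forall>a y. f (rp_smul p a y) = a * f y) \<and>
           (\<forall>y. rp_norm v p y \<le> 1 \<longrightarrow> v (f y) \<le> 1) \<and> v (f x) > 1))"

type_synonym ('n, 'a) mps = "('n \<Rightarrow> nat) \<Rightarrow> 'a"

definition mps_add :: "('n, 'a::field) mps \<Rightarrow> ('n, 'a) mps \<Rightarrow> ('n, 'a) mps" where
  "mps_add a b = (\<lambda>\<nu>. a \<nu> + b \<nu>)"

definition mps_mult :: "('n::finite, 'a::field) mps \<Rightarrow> ('n, 'a) mps \<Rightarrow> ('n, 'a) mps" where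
  "mps_mult a b = (\<lambda>\<nu>. \<Sum>\<mu>\<in>{\<mu>. \<forall>i. \<mu> i \<le> \<nu> i}. a \<mu> * b (\<lambda>i. \<nu> i - \<mu> i))"

definition mps_one :: "('n, 'a::field) mps" where
  "mps_one = (\<lambda>\<nu>. if \<nu> = (\<lambda>_. 0) then 1 else 0)"

definition mps_pow :: "('n::finite, 'a::field) mps \<Rightarrow> nat \<Rightarrow> ('n, 'a) mps" where
  "mps_pow a m = ((mps_mult a) ^^ m) mps_one"

definition conv_ps :: "('a::field \<Rightarrow> real) \<Rightarrow> ('n::finite, 'a) mps set" where
  "conv_ps v = {a. \<exists>(r::'n \<Rightarrow> real) (M::real). (\<forall>i. r i > 0) \<and> M > 0 \<and>
                   (\<forall>\<nu>. v (a \<nu>) * (\<Prod>i\<in>UNIV. r i ^ \<nu> i) \<le> M)}"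

text \<open>Frobenius splitting of the ring \<open>K_n(k)\<close>: an additive map \<open>\<phi> : R \<rightarrow> R\<close> with
  \<open>\<phi>(r^p x) = r \<phi>(x)\<close> (i.e. \<open>R\<close>-linear \<open>F_*R \<rightarrow> R\<close>) and \<open>\<phi>(1) = 1\<close>.\<close>
definition conv_ps_frobenius_split :: "('a::field \<Rightarrow> real) \<Rightarrow> nat \<Rightarrow> 'n::finite itself \<Rightarrow> bool" where
  "conv_ps_frobenius_split v p _ \<longleftrightarrow>
     (\<exists>\<phi> :: ('n, 'a) mps \<Rightarrow> ('n, 'a) mps.
        (\<forall>x\<in>conv_ps v. \<phi> x \<in> conv_ps v) \<and>
        (\<forall>x\<in>conv_ps v. \<forall>y\<in>conv_ps v. \<phi> (mps_add x y) = mps_add (\<phi> x) (\<phi> y)) \<and>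
        (\<forall>r\<in>conv_ps v. \<forall>x\<in>conv_ps v. \<phi> (mps_mult (mps_pow r p) x) = mps_mult r (\<phi> x)) \<and>
        \<phi> mps_one = mps_one)"

end

theory Submission
  imports Defs "HOL-Computational_Algebra.Primes"
begin

text \<open>
  A Frobenius splitting of \<open>K_n(k)\<close> comes from a bounded splitting \<open>\<psi>\<close> of \<open>k^p \<subseteq> k\<close>:
  \<open>\<psi>(b^p x) = b \<psi>(x)\<close>, \<open>\<psi>(1) = 1\<close> and \<open>|\<psi> x|^p \<le> K |x|\<close>.  Apply \<open>\<psi>\<close> to the coefficients of
  the monomials \<open>X^{p\<mu>}\<close> and drop all other terms; the bound keeps the series convergent.

  A complement \<open>H\<close> of \<open>k^p\<close> whose distance from \<open>1\<close> is bounded below gives a bounded projection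
  \<open>k^p \<oplus> H \<rightarrow> k^p\<close>.  If \<open>k\<close> is spherically complete, a maximal such \<open>H\<close> (Zorn) already satisfies
  \<open>k^p \<oplus> H = k\<close>.  If \<open>k^{1/p}\<close> has a dense subspace with a countable basis, \<open>H\<close> is built basis
  vector by basis vector, keeping \<open>k^p + H\<close> closed and losing only a controlled factor in the
  distance from \<open>1\<close>; the projection is then defined on a dense subspace and extends by
  continuity.  If the norm is polar, a functional separating a \<open>p\<close>-th power of norm \<open>> 1\<close> from
  the unit ball, normalised at \<open>1\<close>, is the splitting.
\<close>

section \<open>Multivariate formal power series\<close>

lemma finite_atMost_fun [simp]: "finite {..\<nu> :: 'n::finite \<Rightarrow> nat}"
proof (rule finite_subset)
  let ?m = "Max (range \<nu>)"
  show "{..\<nu>} \<subseteq> {f. \<forall>i. (i \<in> UNIV \<longrightarrow> f i \<in> {..?m}) \<and> (i \<notin> UNIV \<longrightarrow> f i = 0)}"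
    by (auto simp: le_fun_def) (meson Max_ge finite_UNIV finite_imageI order_trans rangeI)
  show "finite {f. \<forall>i. (i \<in> (UNIV::'n set) \<longrightarrow> f i \<in> {..?m}) \<and> (i \<notin> UNIV \<longrightarrow> f i = (0::nat))}"
    by (rule finite_set_of_finite_funs) auto
qed

lemma mps_mult_atMost: "mps_mult a b \<nu> = (\<Sum>\<mu>\<in>{..\<nu>}. a \<mu> * b (\<nu> - \<mu>))"
  by (simp add: mps_mult_def atMost_def le_fun_def fun_diff_def)

lemma mps_mult_commute: "mps_mult a b = mps_mult b (a :: ('n::finite, 'a::field) mps)"
proof
  fix \<nu>
  show "mps_mult a b \<nu> = mps_mult b a \<nu>"
    unfolding mps_mult_atMost
    by (rule sum.reindex_bij_witness[where i="\<lambda>\<mu>. \<nu> - \<mu>" and j="\<lambda>\<mu>. \<nu> - \<mu>"])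
      (auto simp: le_fun_def fun_diff_def mult.commute)
qed

lemma mps_mult_assoc:
  "mps_mult (mps_mult a b) c = mps_mult a (mps_mult b (c :: ('n::finite, 'a::field) mps))"
proof
  fix \<nu>
  have "mps_mult (mps_mult a b) c \<nu> = (\<Sum>\<mu>\<in>{..\<nu>}. \<Sum>l\<in>{..\<mu>}. a l * b (\<mu> - l) * c (\<nu> - \<mu>))"
    by (simp add: mps_mult_atMost sum_distrib_right)
  also have "\<dots> = (\<Sum>\<mu>\<in>{..\<nu>}. \<Sum>l\<in>{l\<in>{..\<nu>}. l \<le> \<mu>}. a l * b (\<mu> - l) * c (\<nu> - \<mu>))"
    by (intro sum.cong refl arg_cong[where f="\<lambda>A. sum _ A"]) (auto intro: order_trans)
  also have "\<dots> = (\<Sum>l\<in>{..\<nu>}. \<Sum>\<mu>\<in>{\<mu>\<in>{..\<nu>}. l \<le> \<mu>}. a l * b (\<mu> - l) * c (\<nu> - \<mu>))"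
    by (rule sum.swap_restrict) simp_all
  also have "\<dots> = (\<Sum>l\<in>{..\<nu>}. a l * (\<Sum>\<kappa>\<in>{..\<nu> - l}. b \<kappa> * c (\<nu> - l - \<kappa>)))"
  proof (rule sum.cong[OF refl])
    fix l assume "l \<in> {..\<nu>}"
    then show "(\<Sum>\<mu>\<in>{\<mu>\<in>{..\<nu>}. l \<le> \<mu>}. a l * b (\<mu> - l) * c (\<nu> - \<mu>)) =
               a l * (\<Sum>\<kappa>\<in>{..\<nu> - l}. b \<kappa> * c (\<nu> - l - \<kappa>))"
      unfolding sum_distrib_left
      by (intro sum.reindex_bij_witness[where i="\<lambda>\<kappa> i. l i + \<kappa> i" and j="\<lambda>\<mu>. \<mu> - l"])
        (auto simp: le_fun_def fun_diff_def mult.assoc diff_le_mono le_diff_conv2 add.commute)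
  qed
  also have "\<dots> = mps_mult a (mps_mult b c) \<nu>"
    by (simp add: mps_mult_atMost)
  finally show "mps_mult (mps_mult a b) c \<nu> = mps_mult a (mps_mult b c) \<nu>" .
qed

lemma mps_mult_add_right: "mps_mult a (mps_add b c) = mps_add (mps_mult a b) (mps_mult a c)"
  by (simp add: mps_add_def mps_mult_def fun_eq_iff distrib_left sum.distrib)

lemma mps_mult_one_left: "mps_mult mps_one a = (a :: ('n::finite, 'a::field) mps)"
proof
  fix \<nu>
  have "mps_mult mps_one a \<nu> = (\<Sum>\<mu>\<in>{\<lambda>_. 0}. mps_one \<mu> * a (\<nu> - \<mu>))"
    unfolding mps_mult_atMost by (rule sum.mono_neutral_right) (auto simp: mps_one_def le_fun_def)
  then show "mps_mult mps_one a \<nu> = a \<nu>" by (simp add: mps_one_def fun_diff_def)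
qed

text \<open>A type copy of \<open>mps\<close> that is a commutative ring, so that the freshman's dream applies.\<close>
typedef ('n::finite, 'a::field) mps_ring = "UNIV :: ('n, 'a) mps set" ..

setup_lifting type_definition_mps_ring

instantiation mps_ring :: (finite, field) comm_ring_1
begin
lift_definition zero_mps_ring :: "('a, 'b) mps_ring" is "\<lambda>_. 0" .
lift_definition one_mps_ring :: "('a, 'b) mps_ring" is mps_one .
lift_definition plus_mps_ring :: "('a, 'b) mps_ring \<Rightarrow> ('a, 'b) mps_ring \<Rightarrow> ('a, 'b) mps_ring"
  is mps_add .
lift_definition times_mps_ring :: "('a, 'b) mps_ring \<Rightarrow> ('a, 'b) mps_ring \<Rightarrow> ('a, 'b) mps_ring"
  is mps_mult .
lift_definition uminus_mps_ring :: "('a, 'b) mps_ring \<Rightarrow> ('a, 'b) mps_ring" is "\<lambda>a \<nu>. - a \<nu>" .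
lift_definition minus_mps_ring :: "('a, 'b) mps_ring \<Rightarrow> ('a, 'b) mps_ring \<Rightarrow> ('a, 'b) mps_ring"
  is "\<lambda>a b \<nu>. a \<nu> - b \<nu>" .
instance
proof
  fix a b c :: "('a, 'b) mps_ring"
  show "a * b * c = a * (b * c)" by transfer (rule mps_mult_assoc)
  show "a * b = b * a" by transfer (rule mps_mult_commute)
  show "1 * a = a" by transfer (rule mps_mult_one_left)
  show "(a + b) * c = a * c + b * c" by transfer (metis mps_mult_commute mps_mult_add_right)
  show "a + b + c = a + (b + c)" by transfer (simp add: mps_add_def add.assoc)
  show "a + b = b + a" by transfer (simp add: mps_add_def add.commute)
  show "0 + a = a" by transfer (simp add: mps_add_def)
  show "- a + a = 0" by transfer (simp add: mps_add_def)
  show "a - b = a + - b" by transfer (simp add: mps_add_def)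
  show "(0 :: ('a, 'b) mps_ring) \<noteq> 1" by transfer (metis mps_one_def zero_neq_one)
qed
end

lemma Rep_mps_ring_power: "Rep_mps_ring (Abs_mps_ring r ^ m) = mps_pow r m"
  by (induction m) (simp_all add: mps_pow_def one_mps_ring.rep_eq times_mps_ring.rep_eq Abs_mps_ring_inverse)

lemma Rep_mps_ring_sum: "Rep_mps_ring (sum f A) \<nu> = (\<Sum>x\<in>A. Rep_mps_ring (f x) \<nu>)"
  by (induction A rule: infinite_finite_induct)
    (simp_all add: zero_mps_ring.rep_eq plus_mps_ring.rep_eq mps_add_def)

lemma CHAR_mps_ring: "CHAR(('n::finite, 'a::field) mps_ring) = CHAR('a)"
proof -
  have of_nat: "Rep_mps_ring (of_nat n :: ('n, 'a) mps_ring) = (\<lambda>\<nu>. if \<nu> = (\<lambda>_. 0) then of_nat n else 0)" for n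
    by (induction n) (auto simp: zero_mps_ring.rep_eq plus_mps_ring.rep_eq one_mps_ring.rep_eq
        mps_add_def mps_one_def)
  have "of_nat n = (0 :: ('n, 'a) mps_ring) \<longleftrightarrow> of_nat n = (0 :: 'a)" for n
    by (auto simp: Rep_mps_ring_inject[symmetric] of_nat zero_mps_ring.rep_eq fun_eq_iff)
  then show ?thesis
    by (intro CHAR_eqI) (simp_all add: of_nat_eq_0_iff_char_dvd)
qed

definition monom :: "'a::field \<Rightarrow> ('n::finite \<Rightarrow> nat) \<Rightarrow> ('n, 'a) mps" where
  "monom c \<mu> = (\<lambda>\<nu>. if \<nu> = \<mu> then c else 0)"

lemma mps_mult_monom: "mps_mult (monom c \<mu>) (monom d \<kappa>) = monom (c * d) (\<lambda>i. \<mu> i + \<kappa> i)"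
proof
  fix \<nu>
  have "mps_mult (monom c \<mu>) (monom d \<kappa>) \<nu> = (\<Sum>l\<in>{..\<nu>}. if l = \<mu> then c * monom d \<kappa> (\<nu> - \<mu>) else 0)"
    unfolding mps_mult_atMost by (rule sum.cong) (auto simp: monom_def)
  also have "\<dots> = (if \<mu> \<le> \<nu> \<and> \<nu> - \<mu> = \<kappa> then c * d else 0)"
    by (simp add: sum.delta' monom_def)
  also have "\<dots> = monom (c * d) (\<lambda>i. \<mu> i + \<kappa> i) \<nu>"
  proof -
    have "(\<mu> \<le> \<nu> \<and> \<nu> - \<mu> = \<kappa>) \<longleftrightarrow> \<nu> = (\<lambda>i. \<mu> i + \<kappa> i)"
      by (auto simp: le_fun_def fun_diff_def fun_eq_iff) (metis le_add_diff_inverse)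
    then show ?thesis by (simp add: monom_def)
  qed
  finally show "mps_mult (monom c \<mu>) (monom d \<kappa>) \<nu> = monom (c * d) (\<lambda>i. \<mu> i + \<kappa> i) \<nu>" .
qed

lemma monom_power: "Abs_mps_ring (monom c \<mu>) ^ m = Abs_mps_ring (monom (c ^ m) (\<lambda>i. m * \<mu> i))"
proof (induction m)
  case 0
  then show ?case by (simp add: one_mps_ring_def monom_def mps_one_def)
next
  case (Suc m)
  then show ?case by (simp add: times_mps_ring_def Abs_mps_ring_inverse mps_mult_monom)
qed

lemma mps_mult_cong_atMost:
  assumes "\<forall>\<mu>\<le>\<nu>. a \<mu> = a' \<mu>" and "\<forall>\<mu>\<le>\<nu>. b \<mu> = b' \<mu>" and "\<mu> \<le> \<nu>"
  shows "mps_mult a b \<mu> = mps_mult a' b' \<mu>"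
  unfolding mps_mult_atMost
proof (rule sum.cong[OF refl])
  fix l assume "l \<in> {..\<mu>}"
  then have "l \<le> \<nu>" using \<open>\<mu> \<le> \<nu>\<close> by (meson atMost_iff order_trans)
  moreover have "\<mu> - l \<le> \<nu>"
    using \<open>\<mu> \<le> \<nu>\<close> order_trans[OF diff_le_self] by (auto simp: le_fun_def fun_diff_def)
  ultimately show "a l * b (\<mu> - l) = a' l * b' (\<mu> - l)" using assms by simp
qed

lemma mps_pow_cong_atMost:
  assumes "\<forall>\<mu>\<le>\<nu>. a \<mu> = a' \<mu>"
  shows "\<forall>\<mu>\<le>\<nu>. mps_pow a m \<mu> = mps_pow a' m \<mu>"
  by (induction m) (simp_all add: mps_pow_def mps_mult_cong_atMost[OF assms])

lemma mps_pow_CHAR: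
  fixes r :: "('n::finite, 'a::field) mps"
  assumes "prime p" and "CHAR('a) = p"
  shows "mps_pow r p \<nu> = (if \<forall>i. p dvd \<nu> i then r (\<lambda>i. \<nu> i div p) ^ p else 0)"
proof -
  have "p > 0" using \<open>prime p\<close> prime_gt_0_nat by blast
  \<comment> \<open>Below \<open>\<nu>\<close>, \<open>r\<close> agrees with a polynomial, whose \<open>p\<close>-th power is given by the freshman's dream.\<close>
  define t where "t = (\<Sum>\<mu>\<in>{..\<nu>}. Abs_mps_ring (monom (r \<mu>) \<mu>) :: ('n, 'a) mps_ring)"
  have "\<forall>\<kappa>\<le>\<nu>. Rep_mps_ring t \<kappa> = r \<kappa>"
    by (simp add: t_def Rep_mps_ring_sum Abs_mps_ring_inverse monom_def)
  then have "mps_pow r p \<nu> = Rep_mps_ring (t ^ p) \<nu>"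
    using mps_pow_cong_atMost[of \<nu> r "Rep_mps_ring t" p]
    by (simp add: Rep_mps_ring_power[symmetric] Rep_mps_ring_inverse)
  also have "t ^ p = (\<Sum>\<mu>\<in>{..\<nu>}. Abs_mps_ring (monom (r \<mu>) \<mu>) ^ p)"
    unfolding t_def by (rule freshmans_dream_sum) (simp_all add: CHAR_mps_ring assms)
  also have "Rep_mps_ring \<dots> \<nu> = (\<Sum>\<mu>\<in>{..\<nu>}. if \<nu> = (\<lambda>i. p * \<mu> i) then r \<mu> ^ p else 0)"
    unfolding Rep_mps_ring_sum monom_power by (simp add: Abs_mps_ring_inverse monom_def)
  also have "\<dots> = (\<Sum>\<mu>\<in>{..\<nu>}. if \<mu> = (\<lambda>i. \<nu> i div p) then
                     (if \<forall>i. p dvd \<nu> i then r (\<lambda>i. \<nu> i div p) ^ p else 0) else 0)"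
  proof (rule sum.cong[OF refl])
    fix \<mu>
    have "\<nu> = (\<lambda>i. p * \<mu> i) \<longleftrightarrow> \<mu> = (\<lambda>i. \<nu> i div p) \<and> (\<forall>i. p dvd \<nu> i)"
      using \<open>p > 0\<close> by (auto simp: fun_eq_iff)
    then show "(if \<nu> = (\<lambda>i. p * \<mu> i) then r \<mu> ^ p else 0) =
      (if \<mu> = (\<lambda>i. \<nu> i div p) then (if \<forall>i. p dvd \<nu> i then r (\<lambda>i. \<nu> i div p) ^ p else 0) else 0)"
      by auto
  qed
  also have "\<dots> = (if \<forall>i. p dvd \<nu> i then r (\<lambda>i. \<nu> i div p) ^ p else 0)"
    by (simp add: sum.delta le_fun_def div_le_dividend)
  finally show ?thesis .
qed

lemma mps_mult_pow_CHAR_scaled: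
  fixes r x :: "('n::finite, 'a::field) mps"
  assumes "prime p" and "CHAR('a) = p"
  shows "mps_mult (mps_pow r p) x (\<lambda>i. p * \<mu> i) = (\<Sum>\<kappa>\<in>{..\<mu>}. r \<kappa> ^ p * x (\<lambda>i. p * (\<mu> i - \<kappa> i)))"
proof -
  have "p > 0" using \<open>prime p\<close> prime_gt_0_nat by blast
  define h where "h = (\<lambda>(\<kappa>::'n \<Rightarrow> nat) i. p * \<kappa> i)"
  have "inj_on h {..\<mu>}" using \<open>p > 0\<close> by (simp add: h_def inj_on_def fun_eq_iff)
  have "mps_mult (mps_pow r p) x (h \<mu>) = (\<Sum>l\<in>h ` {..\<mu>}. mps_pow r p l * x (h \<mu> - l))"
    unfolding mps_mult_atMost
  proof (rule sum.mono_neutral_right)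
    show "h ` {..\<mu>} \<subseteq> {..h \<mu>}" by (auto simp: h_def le_fun_def)
    show "\<forall>l\<in>{..h \<mu>} - h ` {..\<mu>}. mps_pow r p l * x (h \<mu> - l) = 0"
    proof
      fix l assume l: "l \<in> {..h \<mu>} - h ` {..\<mu>}"
      have "\<not> (\<forall>i. p dvd l i)"
      proof
        assume "\<forall>i. p dvd l i"
        then have "l = h (\<lambda>i. l i div p)" by (simp add: h_def fun_eq_iff)
        moreover have "(\<lambda>i. l i div p) \<le> \<mu>"
          using l \<open>p > 0\<close> by (auto simp: h_def le_fun_def) (metis div_le_mono nonzero_mult_div_cancel_left not_gr0)
        ultimately show False using l by auto
      qed
      then show "mps_pow r p l * x (h \<mu> - l) = 0" by (simp add: mps_pow_CHAR[OF assms] del: not_all)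
    qed
  qed simp
  also have "\<dots> = (\<Sum>\<kappa>\<in>{..\<mu>}. mps_pow r p (h \<kappa>) * x (h \<mu> - h \<kappa>))"
    by (rule sum.reindex[OF \<open>inj_on h {..\<mu>}\<close>, unfolded comp_def])
  also have "\<dots> = (\<Sum>\<kappa>\<in>{..\<mu>}. r \<kappa> ^ p * x (\<lambda>i. p * (\<mu> i - \<kappa> i)))"
    using \<open>p > 0\<close> by (simp add: mps_pow_CHAR[OF assms] h_def fun_diff_def diff_mult_distrib2)
  finally show ?thesis by (simp add: h_def)
qed

section \<open>Non-Archimedean absolute values\<close>

locale nonarch_field =
  fixes v :: "'a::field \<Rightarrow> real"
  assumes nonarch_abs: "nonarch_abs v"
begin

lemma v_nonneg [simp]: "0 \<le> v x"
  using nonarch_abs by (simp add: nonarch_abs_def)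

lemma v_eq_0_iff [simp]: "v x = 0 \<longleftrightarrow> x = 0"
  using nonarch_abs by (simp add: nonarch_abs_def)

lemma v_zero [simp]: "v 0 = 0"
  by simp

lemma v_pos_iff [simp]: "0 < v x \<longleftrightarrow> x \<noteq> 0"
  using v_nonneg[of x] v_eq_0_iff[of x] by linarith

lemma v_mult [simp]: "v (x * y) = v x * v y"
  using nonarch_abs by (simp add: nonarch_abs_def)

lemma v_add_le_max: "v (x + y) \<le> max (v x) (v y)"
  using nonarch_abs by (simp add: nonarch_abs_def)

lemma v_one [simp]: "v 1 = 1"
  using v_mult[of 1 1] v_eq_0_iff[of 1] by (metis mult_cancel_left1 one_neq_zero)

lemma v_minus [simp]: "v (- x) = v x"
proof -
  have "v (-1) * v (-1) = 1" by (simp flip: v_mult)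
  then have "v (-1) = 1" using v_nonneg[of "-1"] unfolding square_eq_1_iff by linarith
  then show ?thesis using v_mult[of "-1" x] by simp
qed

lemma v_diff_commute: "v (x - y) = v (y - x)"
  using v_minus[of "y - x"] by simp

lemma v_diff_le_max: "v (x - y) \<le> max (v x) (v y)"
  using v_add_le_max[of x "- y"] by simp

lemma v_diff_triangle: "v (x - z) \<le> max (v (x - y)) (v (y - z))"
  using v_add_le_max[of "x - y" "y - z"] by simp

lemma v_add_less: "v x < e \<Longrightarrow> v y < e \<Longrightarrow> v (x + y) < e"
  using v_add_le_max[of x y] by simp

lemma v_diff_triangle_less: "v (x - y) < e \<Longrightarrow> v (y - z) < e \<Longrightarrow> v (x - z) < e"
  using v_add_less[of "x - y" e "y - z"] by simp

lemma v_power [simp]: "v (x ^ n) = v x ^ n"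
  by (induction n) simp_all

lemma v_inverse [simp]: "v (inverse x) = inverse (v x)"
proof (cases "x = 0")
  case False
  then have "v x * v (inverse x) = 1" by (simp flip: v_mult)
  then show ?thesis by (simp add: inverse_unique)
qed simp

lemma v_divide [simp]: "v (x / y) = v x / v y"
  by (simp add: divide_inverse)

lemma v_add_eq_left: "v y < v x \<Longrightarrow> v (x + y) = v x"
  using v_add_le_max[of x y] v_diff_le_max[of "x + y" y] by (auto simp: max_def split: if_splits)

definition v_lim :: "(nat \<Rightarrow> 'a) \<Rightarrow> 'a \<Rightarrow> bool" where
  "v_lim s l \<longleftrightarrow> (\<forall>e>0. \<exists>N. \<forall>n\<ge>N. v (s n - l) < e)"

definition v_Cauchy :: "(nat \<Rightarrow> 'a) \<Rightarrow> bool" where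
  "v_Cauchy s \<longleftrightarrow> (\<forall>e>0. \<exists>N. \<forall>m\<ge>N. \<forall>n\<ge>N. v (s m - s n) < e)"

definition v_closed :: "'a set \<Rightarrow> bool" where
  "v_closed S \<longleftrightarrow> (\<forall>s l. (\<forall>n. s n \<in> S) \<and> v_lim s l \<longrightarrow> l \<in> S)"

lemma v_lim_iff_diff: "v_lim s l \<longleftrightarrow> v_lim (\<lambda>n. s n - l) 0"
  by (simp add: v_lim_def)

lemma v_lim_unique: "v_lim s l \<Longrightarrow> v_lim s l' \<Longrightarrow> l = l'"
proof (rule ccontr)
  assume "v_lim s l" "v_lim s l'" "l \<noteq> l'"
  then have "v (l - l') > 0" by simp
  then obtain N N' where "\<forall>n\<ge>N. v (s n - l) < v (l - l')" "\<forall>n\<ge>N'. v (s n - l') < v (l - l')"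
    using \<open>v_lim s l\<close> \<open>v_lim s l'\<close> unfolding v_lim_def by meson
  then have "v (l - s (max N N')) < v (l - l')" "v (s (max N N') - l') < v (l - l')"
    by (simp_all add: v_diff_commute[of l])
  then show False using v_diff_triangle[of l l' "s (max N N')"] by simp
qed

lemma v_lim_imp_Cauchy: "v_lim s l \<Longrightarrow> v_Cauchy s"
  unfolding v_Cauchy_def
proof (intro allI impI)
  fix e :: real assume "v_lim s l" "e > 0"
  then obtain N where N: "\<forall>n\<ge>N. v (s n - l) < e" unfolding v_lim_def by blast
  have "v (s m - s n) < e" if "m \<ge> N" "n \<ge> N" for m n
    using v_diff_triangle_less[of "s m" l e "s n"] N that by (simp add: v_diff_commute[of l])
  then show "\<exists>N. \<forall>m\<ge>N. \<forall>n\<ge>N. v (s m - s n) < e" by blast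
qed

lemma v_Cauchy_convergent: "abs_complete v \<Longrightarrow> v_Cauchy s \<Longrightarrow> \<exists>l. v_lim s l"
  unfolding abs_complete_def v_Cauchy_def v_lim_def by blast

lemma v_lim_const: "v_lim (\<lambda>n. c) c"
  by (simp add: v_lim_def)

lemma v_lim_add: "v_lim s l \<Longrightarrow> v_lim t l' \<Longrightarrow> v_lim (\<lambda>n. s n + t n) (l + l')"
  unfolding v_lim_def
proof (intro allI impI)
  fix e :: real assume "\<forall>e>0. \<exists>N. \<forall>n\<ge>N. v (s n - l) < e" "\<forall>e>0. \<exists>N. \<forall>n\<ge>N. v (t n - l') < e" "e > 0"
  then obtain N N' where "\<forall>n\<ge>N. v (s n - l) < e" "\<forall>n\<ge>N'. v (t n - l') < e" by meson
  then have "v (s n + t n - (l + l')) < e" if "n \<ge> max N N'" for n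
    using that v_add_less[of "s n - l" e "t n - l'"] by (simp add: algebra_simps)
  then show "\<exists>N. \<forall>n\<ge>N. v (s n + t n - (l + l')) < e" by blast
qed

lemma v_lim_mult_left: "v_lim s l \<Longrightarrow> v_lim (\<lambda>n. c * s n) (c * l)"
proof (cases "c = 0")
  case False
  assume lim: "v_lim s l"
  show ?thesis
    unfolding v_lim_def
  proof (intro allI impI)
    fix e :: real assume "e > 0"
    then obtain N where "\<forall>n\<ge>N. v (s n - l) < e / v c"
      using lim False unfolding v_lim_def by (meson divide_pos_pos v_pos_iff)
    then have "v (c * s n - c * l) < e" if "n \<ge> N" for n
      using that False by (simp add: right_diff_distrib[symmetric] pos_less_divide_eq mult.commute)
    then show "\<exists>N. \<forall>n\<ge>N. v (c * s n - c * l) < e" by blast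
  qed
qed (simp add: v_lim_const)

lemma v_lim_diff: "v_lim s l \<Longrightarrow> v_lim t l' \<Longrightarrow> v_lim (\<lambda>n. s n - t n) (l - l')"
  using v_lim_add[of s l "\<lambda>n. - t n" "- l'"] v_lim_mult_left[of t l' "-1"] by simp

lemma v_lim_power_zero:
  assumes "p > 0" and "v_lim s 0"
  shows "v_lim (\<lambda>n. s n ^ p) 0"
  unfolding v_lim_def
proof (intro allI impI)
  fix e :: real assume "e > 0"
  then obtain N where N: "\<forall>n\<ge>N. v (s n) < min e 1"
    using \<open>v_lim s 0\<close> unfolding v_lim_def by (metis diff_zero min_less_iff_conj zero_less_one)
  have "v (s n) ^ p < e" if "n \<ge> N" for n
  proof -
    have "v (s n) ^ p \<le> v (s n)"
      using N that power_decreasing[of 1 p "v (s n)"] \<open>p > 0\<close> by force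
    moreover have "v (s n) < e" using N that by simp
    ultimately show ?thesis by simp
  qed
  then show "\<exists>N. \<forall>n\<ge>N. v (s n ^ p - 0) < e" by auto
qed

lemma v_lim_zero_if_power_bounded:
  assumes "p > 0" and "K > 0" and "\<forall>n. v (s n) ^ p \<le> K * v (t n)" and "v_lim t 0"
  shows "v_lim s 0"
  unfolding v_lim_def
proof (intro allI impI)
  fix e :: real assume "e > 0"
  then obtain N where "\<forall>n\<ge>N. v (t n) < e ^ p / K"
    using assms(2,4) unfolding v_lim_def by (metis diff_zero divide_pos_pos zero_less_power)
  then have "v (s n) ^ p < e ^ p" if "n \<ge> N" for n
    using that assms(2,3) by (smt (verit, best) mult.commute pos_less_divide_eq)
  then have "v (s n) < e" if "n \<ge> N" for n
    using that power_less_imp_less_base \<open>e > 0\<close> by (meson less_imp_le)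
  then show "\<exists>N. \<forall>n\<ge>N. v (s n - 0) < e" by auto
qed

lemma v_Cauchy_if_power_bounded:
  assumes "p > 0" and "K > 0" and "\<forall>m n. v (s m - s n) ^ p \<le> K * v (t m - t n)" and "v_Cauchy t"
  shows "v_Cauchy s"
  unfolding v_Cauchy_def
proof (intro allI impI)
  fix e :: real assume "e > 0"
  then obtain N where "\<forall>m\<ge>N. \<forall>n\<ge>N. v (t m - t n) < e ^ p / K"
    using assms(2,4) unfolding v_Cauchy_def by (metis divide_pos_pos zero_less_power)
  then have "v (s m - s n) ^ p < e ^ p" if "m \<ge> N" "n \<ge> N" for m n
    using that assms(2,3) by (smt (verit, best) mult.commute pos_less_divide_eq)
  then have "v (s m - s n) < e" if "m \<ge> N" "n \<ge> N" for m n
    using that power_less_imp_less_base \<open>e > 0\<close> by (meson less_imp_le)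
  then show "\<exists>N. \<forall>m\<ge>N. \<forall>n\<ge>N. v (s m - s n) < e" by blast
qed

lemma v_lim_of_approximable:
  assumes "\<forall>e>0. \<exists>y\<in>S. v (x - y) < e"
  obtains s where "\<forall>n. s n \<in> S" and "v_lim s x"
proof -
  have "\<forall>n. \<exists>y\<in>S. v (x - y) < 1 / real (Suc n)" using assms by simp
  then obtain s where s: "\<forall>n. s n \<in> S \<and> v (x - s n) < 1 / real (Suc n)" by metis
  have "v_lim s x"
    unfolding v_lim_def
  proof (intro allI impI)
    fix e :: real assume "e > 0"
    then obtain N where N: "1 / real (Suc N) < e"
      by (metis inverse_eq_divide of_nat_Suc reals_Archimedean)
    have "v (s n - x) < e" if "n \<ge> N" for n
    proof -
      have "1 / real (Suc n) \<le> 1 / real (Suc N)" using that by (simp add: frac_le)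
      then show ?thesis using s N by (smt (verit) v_diff_commute)
    qed
    then show "\<exists>N. \<forall>n\<ge>N. v (s n - x) < e" by blast
  qed
  then show thesis using s that by blast
qed

lemma v_lim_eventually_v_eq:
  assumes "v_lim s l" and "l \<noteq> 0"
  obtains N where "\<forall>n\<ge>N. v (s n) = v l"
proof -
  obtain N where "\<forall>n\<ge>N. v (s n - l) < v l" using assms v_pos_iff unfolding v_lim_def by blast
  then have "\<forall>n\<ge>N. v (l + (s n - l)) = v l" using v_add_eq_left by blast
  then show thesis using that by simp
qed

lemma v_lim_power_bound:
  assumes "p > 0" and "K > 0" and bound: "\<forall>n. v (t n) ^ p \<le> K * v (s n)"
    and "v_lim s x" and "v_lim t l"
  shows "v l ^ p \<le> K * v x"
proof (cases "x = 0 \<or> l = 0")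
  case True
  have "v_lim t 0" if "x = 0"
    using v_lim_zero_if_power_bounded[OF assms(1-3)] \<open>v_lim s x\<close> that by simp
  then have "l = 0" if "x = 0" using v_lim_unique \<open>v_lim t l\<close> that by blast
  then show ?thesis using True assms(1,2) by (auto simp: power_0_left)
next
  case False
  \<comment> \<open>Non-Archimedean: the values themselves are eventually constant.\<close>
  obtain N where "\<forall>n\<ge>N. v (t n) = v l" using v_lim_eventually_v_eq[OF \<open>v_lim t l\<close>] False by blast
  moreover obtain N' where "\<forall>n\<ge>N'. v (s n) = v x"
    using v_lim_eventually_v_eq[OF \<open>v_lim s x\<close>] False by blast
  ultimately have "v l = v (t (max N N'))" and "v x = v (s (max N N'))" by simp_all
  then show ?thesis using bound by simp
qed

lemma v_power_int [simp]: "v (x powi n) = v x powi n"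
  by (simp add: power_int_def)

lemma exists_v_gt_1:
  assumes "nontrivial_value_group v"
  obtains a where "v a > 1"
proof -
  obtain x where "x \<noteq> 0" "v x \<noteq> 1" using assms by (auto simp: nontrivial_value_group_def)
  then have "v x > 1 \<or> v (inverse x) > 1" by (simp add: one_less_inverse_iff) linarith
  then show thesis using that by blast
qed

lemma exists_pth_power_scaling:
  assumes "v a > 1" and "y \<noteq> 0" and "p > 0"
  obtains c where "c \<noteq> 0" and "v (c ^ p * y) \<le> 1" and "1 \<le> v a ^ p * v (c ^ p * y)"
proof -
  define r where "r = log (v a) (v y)"
  define k where "k = \<lfloor>- r / p\<rfloor>"
  have "a \<noteq> 0" using assms(1) by auto
  have "k \<le> - r / p" and "- r / p < k + 1" unfolding k_def by linarith+
  then have "real p * k \<le> - r" and "- r < real p * (k + 1)"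
    using assms(3) by (simp_all add: field_simps)
  have "v ((a powi k) ^ p * y) = v a powi (k * int p) * v y" by (simp add: power_int_power')
  also have "\<dots> = v a powr (p * k) * v a powr r"
    using assms(1,2) \<open>a \<noteq> 0\<close> powr_real_of_int'[of "v a" "k * int p"]
    by (simp add: r_def mult.commute powr_log_cancel)
  also have "\<dots> = v a powr (p * k + r)" by (simp add: powr_add)
  finally have "v ((a powi k) ^ p * y) = v a powr (p * k + r)" .
  moreover have "v a ^ p * v a powr (p * k + r) = v a powr (p + (p * k + r))"
    using \<open>a \<noteq> 0\<close> powr_realpow[of "v a" p] by (simp add: powr_add)
  moreover have "v a powr (p * k + r) \<le> 1"
    using assms(1) \<open>a \<noteq> 0\<close> \<open>real p * k \<le> - r\<close> powr_le_cancel_iff[of "v a" _ 0] by simp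
  moreover have "1 \<le> v a powr (p + (p * k + r))"
    using assms(1) \<open>a \<noteq> 0\<close> \<open>- r < real p * (k + 1)\<close> powr_le_cancel_iff[of "v a" 0]
    by (simp add: distrib_left)
  ultimately show thesis using that[of "a powi k"] \<open>a \<noteq> 0\<close> by simp
qed

lemma rp_dense_approx:
  assumes "p > 0" and "rp_dense v p V" and "e > 0"
  obtains y where "y \<in> V" and "v (x - y) < e"
proof -
  have "e powr (1 / p) > 0" using assms(3) by simp
  then obtain y where "y \<in> V" "v (x - y) powr (1 / p) < e powr (1 / p)"
    using assms(2) unfolding rp_dense_def rp_norm_def by blast
  then have "v (x - y) < e"
    using assms(1,3) powr_less_cancel2[of "1 / p" "v (x - y)" e] by (cases "x = y") simp_all
  then show thesis using that \<open>y \<in> V\<close> by blast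
qed

end

section \<open>Subspaces of \<open>k\<close> over \<open>k^p\<close>\<close>

lemma add_power_CHAR:
  fixes x y :: "'a::comm_ring_1"
  shows "CHAR('a) = p \<Longrightarrow> prime p \<Longrightarrow> (x + y) ^ p = x ^ p + y ^ p"
  by (rule freshmans_dream) simp_all

lemma diff_power_CHAR:
  fixes x y :: "'a::comm_ring_1"
  assumes "CHAR('a) = p" and "prime p"
  shows "(x - y) ^ p = x ^ p - y ^ p"
  using add_power_CHAR[OF assms, of x "- y"] minus_power_prime_CHAR[of p, OF assms(1)[symmetric] assms(2)]
  by simp

lemma rp_subspace_zero: "rp_subspace p H \<Longrightarrow> 0 \<in> H"
  by (simp add: rp_subspace_def)

lemma rp_subspace_add: "rp_subspace p H \<Longrightarrow> x \<in> H \<Longrightarrow> y \<in> H \<Longrightarrow> x + y \<in> H"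
  by (simp add: rp_subspace_def)

lemma rp_subspace_smul: "rp_subspace p H \<Longrightarrow> x \<in> H \<Longrightarrow> b ^ p * x \<in> H"
  by (simp add: rp_subspace_def rp_smul_def)

lemma rp_subspace_uminus:
  fixes H :: "'a::field set"
  assumes "rp_subspace p H" and "x \<in> H" and "CHAR('a) = p" and "prime p"
  shows "- x \<in> H"
  using rp_subspace_smul[OF assms(1,2), of "-1"] minus_power_prime_CHAR[where 'a='a, of p 1] assms(3,4)
  by simp

lemma rp_subspace_diff:
  fixes H :: "'a::field set"
  assumes "rp_subspace p H" and "x \<in> H" and "y \<in> H" and "CHAR('a) = p" and "prime p"
  shows "x - y \<in> H"
  using rp_subspace_add[OF assms(1,2) rp_subspace_uminus[OF assms(1,3-5)]] by simp

lemma rp_subspace_Union_chain: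
  assumes "C \<noteq> {}" and "chain\<^sub>\<subseteq> C" and "\<forall>H\<in>C. rp_subspace p H"
  shows "rp_subspace p (\<Union>C)"
  unfolding rp_subspace_def
proof (intro conjI ballI allI)
  show "0 \<in> \<Union>C" using assms(1,3) rp_subspace_zero by fastforce
  fix x y assume "x \<in> \<Union>C" "y \<in> \<Union>C"
  then obtain Z where "Z \<in> C" "x \<in> Z" "y \<in> Z"
    using assms(2) unfolding chain_subset_def by blast
  then show "x + y \<in> \<Union>C" using assms(3) rp_subspace_add by blast
next
  fix a x assume "x \<in> \<Union>C"
  then show "rp_smul p a x \<in> \<Union>C" using assms(3) unfolding rp_subspace_def by blast
qed

lemma rp_basis_subset:
  assumes G: "rp_subspace p G" and "B \<subseteq> G" and "rp_basis p V B"
  shows "V \<subseteq> G"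
proof
  fix x assume "x \<in> V"
  have "\<forall>x\<in>V. \<exists>S c. finite S \<and> S \<subseteq> B \<and> x = (\<Sum>b\<in>S. rp_smul p (c b) b)"
    using assms(3) unfolding rp_basis_def by (elim conjE)
  then obtain S c where "finite S" "S \<subseteq> B" "x = (\<Sum>b\<in>S. rp_smul p (c b) b)"
    using \<open>x \<in> V\<close> by blast
  moreover have "(\<Sum>b\<in>S. rp_smul p (c b) b) \<in> G" if "finite S" "S \<subseteq> B" for S
    using that
  proof (induction S rule: finite_induct)
    case (insert y S)
    then have "rp_smul p (c y) y \<in> G" "(\<Sum>b\<in>S. rp_smul p (c b) b) \<in> G"
      using rp_subspace_smul[OF G] \<open>B \<subseteq> G\<close> by (auto simp: rp_smul_def)
    then show ?case using insert.hyps rp_subspace_add[OF G] by simp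
  qed (simp add: rp_subspace_zero[OF G])
  ultimately show "x \<in> G" by simp
qed

definition kp_sum :: "nat \<Rightarrow> 'a::field set \<Rightarrow> 'a set" where
  "kp_sum p H = {c ^ p + h | c h. h \<in> H}"

lemma kp_sum_mono: "H \<subseteq> H' \<Longrightarrow> kp_sum p H \<subseteq> kp_sum p H'"
  unfolding kp_sum_def by blast

lemma subset_kp_sum: "p > 0 \<Longrightarrow> H \<subseteq> kp_sum p H"
  unfolding kp_sum_def by (force intro: exI[of _ 0])

lemma one_in_kp_sum: "rp_subspace p H \<Longrightarrow> 1 \<in> kp_sum p H"
  unfolding kp_sum_def using rp_subspace_zero by (force intro: exI[of _ 1])

lemma rp_subspace_kp_sum:
  fixes H :: "'a::field set"
  assumes H: "rp_subspace p H" and "CHAR('a) = p" and "prime p"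
  shows "rp_subspace p (kp_sum p H)"
  unfolding rp_subspace_def rp_smul_def
proof (intro conjI ballI allI)
  show "0 \<in> kp_sum p H"
    using subset_kp_sum[of p H] rp_subspace_zero[OF H] prime_gt_0_nat[OF \<open>prime p\<close>] by blast
  fix x y assume "x \<in> kp_sum p H" "y \<in> kp_sum p H"
  then obtain c d h h' where "x = c ^ p + h" "y = d ^ p + h'" "h \<in> H" "h' \<in> H"
    by (auto simp: kp_sum_def)
  then have "x + y = (c + d) ^ p + (h + h')" and "h + h' \<in> H"
    using add_power_CHAR[OF assms(2,3)] rp_subspace_add[OF H] by (simp_all add: algebra_simps)
  then show "x + y \<in> kp_sum p H" unfolding kp_sum_def by blast
next
  fix a x assume "x \<in> kp_sum p H"
  then obtain c h where "x = c ^ p + h" "h \<in> H" by (auto simp: kp_sum_def)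
  then have "a ^ p * x = (a * c) ^ p + a ^ p * h" and "a ^ p * h \<in> H"
    using rp_subspace_smul[OF H] by (simp_all add: algebra_simps power_mult_distrib)
  then show "a ^ p * x \<in> kp_sum p H" unfolding kp_sum_def by blast
qed

definition rp_adjoin :: "nat \<Rightarrow> 'a::field set \<Rightarrow> 'a \<Rightarrow> 'a set" where
  "rp_adjoin p H e = {h + c ^ p * e | h c. h \<in> H}"

lemma subset_rp_adjoin: "p > 0 \<Longrightarrow> H \<subseteq> rp_adjoin p H e"
  unfolding rp_adjoin_def by (force intro: exI[of _ 0])

lemma mem_rp_adjoin: "rp_subspace p H \<Longrightarrow> e \<in> rp_adjoin p H e"
  unfolding rp_adjoin_def using rp_subspace_zero by (force intro: exI[of _ 1])

lemma rp_subspace_rp_adjoin: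
  fixes H :: "'a::field set"
  assumes H: "rp_subspace p H" and "CHAR('a) = p" and "prime p"
  shows "rp_subspace p (rp_adjoin p H e)"
  unfolding rp_subspace_def rp_smul_def
proof (intro conjI ballI allI)
  show "0 \<in> rp_adjoin p H e"
    using subset_rp_adjoin[of p H e] rp_subspace_zero[OF H] prime_gt_0_nat[OF \<open>prime p\<close>] by blast
  fix x y assume "x \<in> rp_adjoin p H e" "y \<in> rp_adjoin p H e"
  then obtain c d h h' where "x = h + c ^ p * e" "y = h' + d ^ p * e" "h \<in> H" "h' \<in> H"
    by (auto simp: rp_adjoin_def)
  then have "x + y = (h + h') + (c + d) ^ p * e" and "h + h' \<in> H"
    using add_power_CHAR[OF assms(2,3)] rp_subspace_add[OF H] by (simp_all add: algebra_simps)
  then show "x + y \<in> rp_adjoin p H e" unfolding rp_adjoin_def by blast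
next
  fix a x assume "x \<in> rp_adjoin p H e"
  then obtain c h where "x = h + c ^ p * e" "h \<in> H" by (auto simp: rp_adjoin_def)
  then have "a ^ p * x = a ^ p * h + (a * c) ^ p * e" and "a ^ p * h \<in> H"
    using rp_subspace_smul[OF H] by (simp_all add: algebra_simps power_mult_distrib)
  then show "a ^ p * x \<in> rp_adjoin p H e" unfolding rp_adjoin_def by blast
qed

lemma kp_sum_rp_adjoin: "kp_sum p (rp_adjoin p H e) = rp_adjoin p (kp_sum p H) e"
  unfolding kp_sum_def rp_adjoin_def by (auto simp: add.assoc) (metis add.assoc)+

lemma kp_sum_zero: "kp_sum p {0} = rp_adjoin p {0} 1"
  by (simp add: kp_sum_def rp_adjoin_def)

section \<open>Bounded Frobenius splittings\<close>

text \<open>A splitting of \<open>k^p \<subseteq> k\<close> (read through Frobenius, \<open>k^p \<cong> k\<close>) defined on the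
  subspace \<open>G\<close>, bounded in the sense \<open>|g x| \<le> K^{1/p} |x|^{1/p}\<close>.\<close>
definition bounded_splitting_on :: "('a::field \<Rightarrow> real) \<Rightarrow> nat \<Rightarrow> 'a set \<Rightarrow> ('a \<Rightarrow> 'a) \<Rightarrow> real \<Rightarrow> bool"
  where "bounded_splitting_on v p G g K \<longleftrightarrow>
    rp_subspace p G \<and> 1 \<in> G \<and> (\<forall>x\<in>G. \<forall>y\<in>G. g (x + y) = g x + g y) \<and>
    (\<forall>b. \<forall>x\<in>G. g (b ^ p * x) = b * g x) \<and> g 1 = 1 \<and> 0 < K \<and> (\<forall>x\<in>G. v (g x) ^ p \<le> K * v x)"

lemma (in nonarch_field) conv_ps_coeffs_scaled:
  fixes x :: "('n::finite, 'a) mps"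
  assumes "x \<in> conv_ps v" and "p > 0" and "K > 0"
    and bound: "\<forall>c. v (g c) ^ p \<le> K * v c"
  shows "(\<lambda>\<mu>. g (x (\<lambda>i. p * \<mu> i))) \<in> conv_ps v"
proof -
  obtain r M where r: "\<forall>i. r i > 0" "M > 0" "\<forall>\<nu>. v (x \<nu>) * (\<Prod>i\<in>UNIV. r i ^ \<nu> i) \<le> M"
    using \<open>x \<in> conv_ps v\<close> by (auto simp: conv_ps_def)
  define M' where "M' = max 1 (K * M)"
  have "v (g (x (\<lambda>i. p * \<mu> i))) * (\<Prod>i\<in>UNIV. r i ^ \<mu> i) \<le> M'" for \<mu>
  proof -
    define c where "c = x (\<lambda>i. p * \<mu> i)"
    define P where "P = (\<Prod>i\<in>UNIV. r i ^ \<mu> i)"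
    have "P > 0" unfolding P_def using r(1) by (simp add: prod_pos)
    have "(\<Prod>i\<in>UNIV. r i ^ (p * \<mu> i)) = P ^ p"
      unfolding P_def prod_power_distrib by (simp add: power_mult[symmetric] mult.commute)
    then have "v c * P ^ p \<le> M" using r(3) unfolding c_def by metis
    have "(v (g c) * P) ^ p = v (g c) ^ p * P ^ p" by (simp add: power_mult_distrib)
    also have "\<dots> \<le> K * v c * P ^ p" using bound \<open>P > 0\<close> by (simp add: mult_right_mono)
    also have "\<dots> \<le> K * M" using \<open>v c * P ^ p \<le> M\<close> \<open>K > 0\<close> by (simp add: mult.assoc)
    also have "\<dots> \<le> M' ^ p"
      using power_increasing[of 1 p M'] \<open>p > 0\<close> by (simp add: M'_def)
    finally have "v (g c) * P \<le> M'"
      using power_mono_iff[of "v (g c) * P" M' p] \<open>P > 0\<close> \<open>p > 0\<close> by (simp add: M'_def)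
    then show ?thesis by (simp add: c_def P_def)
  qed
  moreover have "M' > 0" by (simp add: M'_def)
  ultimately show ?thesis using r(1) by (auto simp: conv_ps_def)
qed

locale nonarch_field_char = nonarch_field +
  fixes p :: nat
  assumes CHAR_eq: "CHAR('a) = p" and prime_p: "prime p"
begin

lemma p_pos: "p > 0"
  using prime_p prime_gt_0_nat by blast

lemma conv_ps_frobenius_split_if_bounded_splitting:
  assumes "bounded_splitting_on v p UNIV \<psi> K"
  shows "conv_ps_frobenius_split v p TYPE('n::finite)"
proof -
  have add: "\<forall>x y. \<psi> (x + y) = \<psi> x + \<psi> y" and lin: "\<And>a x. \<psi> (a ^ p * x) = a * \<psi> x"
    and "\<psi> 1 = 1" and "K > 0" and bound: "\<forall>x. v (\<psi> x) ^ p \<le> K * v x"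
    using assms by (auto simp: bounded_splitting_on_def)
  have "\<psi> 0 = 0" using add[rule_format, of 0 0] by (metis add_cancel_left_right add_0)
  then have sum: "\<psi> (sum g A) = (\<Sum>a\<in>A. \<psi> (g a))" for g :: "_ \<Rightarrow> 'a" and A
    using sum_comp_morphism[of \<psi> g A] add by (simp add: comp_def)
  define \<phi> where "\<phi> = (\<lambda>(x::('n, 'a) mps) \<mu>. \<psi> (x (\<lambda>i. p * \<mu> i)))"
  have "\<phi> (mps_mult (mps_pow r p) x) \<mu> = mps_mult r (\<phi> x) \<mu>" for r x :: "('n, 'a) mps" and \<mu>
  proof -
    have "\<phi> (mps_mult (mps_pow r p) x) \<mu> = \<psi> (\<Sum>\<kappa>\<in>{..\<mu>}. r \<kappa> ^ p * x (\<lambda>i. p * (\<mu> i - \<kappa> i)))"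
      by (simp add: \<phi>_def mps_mult_pow_CHAR_scaled[OF prime_p CHAR_eq])
    also have "\<dots> = (\<Sum>\<kappa>\<in>{..\<mu>}. r \<kappa> * \<psi> (x (\<lambda>i. p * (\<mu> i - \<kappa> i))))"
      by (simp add: sum lin)
    also have "\<dots> = mps_mult r (\<phi> x) \<mu>"
      by (simp add: mps_mult_atMost \<phi>_def fun_diff_def)
    finally show ?thesis .
  qed
  moreover have "\<phi> mps_one = mps_one"
    using p_pos \<open>\<psi> 1 = 1\<close> \<open>\<psi> 0 = 0\<close> by (auto simp: \<phi>_def mps_one_def fun_eq_iff)
  moreover have "\<phi> x \<in> conv_ps v" if "x \<in> conv_ps v" for x
    unfolding \<phi>_def by (rule conv_ps_coeffs_scaled[OF that p_pos \<open>K > 0\<close> bound])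
  ultimately show ?thesis
    unfolding conv_ps_frobenius_split_def by (intro exI[of _ \<phi>]) (simp add: \<phi>_def mps_add_def add)
qed

text \<open>With \<open>\<gamma> > 0\<close> this makes \<open>k^p + H\<close> a direct sum, with a bounded projection onto \<open>k^p\<close>.\<close>
definition (in nonarch_field) far_from_one :: "real \<Rightarrow> 'a set \<Rightarrow> bool" where
  "far_from_one \<gamma> H \<longleftrightarrow> (\<forall>h\<in>H. \<gamma> \<le> v (1 - h))"

lemma far_from_one_scaled:
  assumes "rp_subspace p H" and "far_from_one \<gamma> H" and "0 \<le> \<gamma>" and "h \<in> H"
  shows "\<gamma> * v t ^ p \<le> v (t ^ p - h)"
proof (cases "t = 0")
  case True
  then show ?thesis using p_pos by (simp add: power_0_left)
next
  case False
  have "inverse t ^ p * h \<in> H" by (rule rp_subspace_smul[OF assms(1,4)])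
  then have le: "\<gamma> \<le> v (1 - inverse t ^ p * h)" using assms(2) by (simp add: far_from_one_def)
  have "t ^ p - h = t ^ p * (1 - inverse t ^ p * h)"
    using False by (simp add: field_simps power_inverse)
  then have "v (t ^ p - h) = v t ^ p * v (1 - inverse t ^ p * h)" by simp
  then show ?thesis using mult_left_mono[OF le, of "v t ^ p"] by (simp add: mult.commute)
qed

lemma far_from_one_mono: "far_from_one \<gamma> H \<Longrightarrow> \<gamma>' \<le> \<gamma> \<Longrightarrow> far_from_one \<gamma>' H"
  by (auto simp: far_from_one_def)

lemma kp_sum_decomposition_unique:
  assumes "rp_subspace p H" and "far_from_one \<gamma> H" and "\<gamma> > 0"
    and "h \<in> H" and "h' \<in> H" and "c ^ p + h = c' ^ p + h'"
  shows "c = c'"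
proof -
  have "(c - c') ^ p = c ^ p - c' ^ p" by (rule diff_power_CHAR[OF CHAR_eq prime_p])
  also have "\<dots> = h' - h" using assms(6) by (simp add: algebra_simps)
  finally have "(c - c') ^ p = h' - h" .
  moreover have "h' - h \<in> H" by (rule rp_subspace_diff[OF assms(1,5,4) CHAR_eq prime_p])
  ultimately have "\<gamma> * v (c - c') ^ p \<le> 0"
    using far_from_one_scaled[OF assms(1,2) less_imp_le[OF assms(3)], of "h' - h" "c - c'"] by simp
  then have "v (c - c') ^ p \<le> 0" using assms(3) by (simp add: mult_le_0_iff)
  then have "v (c - c') ^ p = 0" by (meson order.antisym v_nonneg zero_le_power)
  then show ?thesis by simp
qed

lemma bounded_splitting_on_kp_sum:
  assumes H: "rp_subspace p H" and "far_from_one \<gamma> H" and "\<gamma> > 0"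
  shows "\<exists>g. bounded_splitting_on v p (kp_sum p H) g (1 / \<gamma>)"
proof -
  define g where "g = (\<lambda>y. SOME c. \<exists>h\<in>H. y = c ^ p + h)"
  have g: "g (c ^ p + h) = c" if "h \<in> H" for c h
  proof -
    have "\<exists>h'\<in>H. c ^ p + h = g (c ^ p + h) ^ p + h'"
      unfolding g_def by (rule someI_ex) (use that in blast)
    then show ?thesis using kp_sum_decomposition_unique[OF assms] that by metis
  qed
  have "bounded_splitting_on v p (kp_sum p H) g (1 / \<gamma>)"
    unfolding bounded_splitting_on_def
  proof (intro conjI ballI allI)
    show "rp_subspace p (kp_sum p H)" by (rule rp_subspace_kp_sum[OF H CHAR_eq prime_p])
    show "1 \<in> kp_sum p H" by (rule one_in_kp_sum[OF H])
    show "g 1 = 1" using g[of 0 1] rp_subspace_zero[OF H] by simp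
    show "0 < 1 / \<gamma>" using \<open>\<gamma> > 0\<close> by simp
  next
    fix x y assume "x \<in> kp_sum p H" "y \<in> kp_sum p H"
    then obtain c d h h' where "x = c ^ p + h" "y = d ^ p + h'" "h \<in> H" "h' \<in> H"
      by (auto simp: kp_sum_def)
    moreover have "x + y = (c + d) ^ p + (h + h')"
      using \<open>x = c ^ p + h\<close> \<open>y = d ^ p + h'\<close> add_power_CHAR[OF CHAR_eq prime_p] by (simp add: algebra_simps)
    ultimately show "g (x + y) = g x + g y" using g rp_subspace_add[OF H] by metis
  next
    fix b x assume "x \<in> kp_sum p H"
    then obtain c h where "x = c ^ p + h" "h \<in> H" by (auto simp: kp_sum_def)
    moreover have "b ^ p * x = (b * c) ^ p + b ^ p * h"
      using \<open>x = c ^ p + h\<close> by (simp add: algebra_simps power_mult_distrib)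
    ultimately show "g (b ^ p * x) = b * g x" using g rp_subspace_smul[OF H] by metis
  next
    fix x assume "x \<in> kp_sum p H"
    then obtain c h where "x = c ^ p + h" "h \<in> H" by (auto simp: kp_sum_def)
    moreover have "\<gamma> * v c ^ p \<le> v (c ^ p - - h)"
      using far_from_one_scaled[OF H assms(2)] rp_subspace_uminus[OF H _ CHAR_eq prime_p] \<open>\<gamma> > 0\<close> \<open>h \<in> H\<close>
      by (meson less_imp_le)
    ultimately show "v (g x) ^ p \<le> 1 / \<gamma> * v x"
      using g \<open>\<gamma> > 0\<close> by (simp add: field_simps)
  qed
  then show ?thesis by blast
qed

lemma bounded_splitting_on_diff:
  assumes "bounded_splitting_on v p G g K" and "x \<in> G" and "y \<in> G"
  shows "x - y \<in> G" and "g (x - y) = g x - g y"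
proof -
  have G: "rp_subspace p G" and add: "\<forall>x\<in>G. \<forall>y\<in>G. g (x + y) = g x + g y"
    using assms(1) by (auto simp: bounded_splitting_on_def)
  show "x - y \<in> G" by (rule rp_subspace_diff[OF G assms(2,3) CHAR_eq prime_p])
  then show "g (x - y) = g x - g y" using add assms(3) by (metis diff_add_cancel eq_diff_eq)
qed

lemma bounded_splitting_on_limit:
  assumes "abs_complete v" and split: "bounded_splitting_on v p G g K"
    and "\<forall>n. s n \<in> G" and "v_lim s x"
  shows "\<exists>l. \<forall>t. (\<forall>n. t n \<in> G) \<and> v_lim t x \<longrightarrow> v_lim (\<lambda>n. g (t n)) l"
proof -
  have "K > 0" using split by (simp add: bounded_splitting_on_def)
  have bound: "v (g y - g z) ^ p \<le> K * v (y - z)" if "y \<in> G" "z \<in> G" for y z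
  proof -
    have "v (g (y - z)) ^ p \<le> K * v (y - z)"
      using split bounded_splitting_on_diff(1)[OF split that] by (simp add: bounded_splitting_on_def)
    then show ?thesis using bounded_splitting_on_diff(2)[OF split that] by simp
  qed
  have "v_Cauchy (\<lambda>n. g (s n))"
  proof (rule v_Cauchy_if_power_bounded[OF p_pos \<open>K > 0\<close>])
    show "\<forall>m n. v (g (s m) - g (s n)) ^ p \<le> K * v (s m - s n)" using bound \<open>\<forall>n. s n \<in> G\<close> by simp
  qed (rule v_lim_imp_Cauchy[OF \<open>v_lim s x\<close>])
  then obtain l where l: "v_lim (\<lambda>n. g (s n)) l" using v_Cauchy_convergent[OF assms(1)] by blast
  have "v_lim (\<lambda>n. g (t n)) l" if t: "\<forall>n. t n \<in> G" "v_lim t x" for t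
  proof -
    have "v_lim (\<lambda>n. t n - s n) 0" using v_lim_diff[OF t(2) \<open>v_lim s x\<close>] by simp
    then have "v_lim (\<lambda>n. g (t n) - g (s n)) 0"
      by (rule v_lim_zero_if_power_bounded[OF p_pos \<open>K > 0\<close>, rotated])
        (use bound t(1) \<open>\<forall>n. s n \<in> G\<close> in simp)
    from v_lim_add[OF this l] show ?thesis by simp
  qed
  then show ?thesis by blast
qed

lemma bounded_splitting_extend:
  assumes "abs_complete v" and split: "bounded_splitting_on v p G g K"
    and dense: "\<forall>x. \<forall>e>0. \<exists>y\<in>G. v (x - y) < e"
  shows "\<exists>\<psi>. bounded_splitting_on v p UNIV \<psi> K"
proof -
  have G: "rp_subspace p G" "1 \<in> G" and gadd: "\<forall>x\<in>G. \<forall>y\<in>G. g (x + y) = g x + g y"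
    and gsmul: "\<forall>b. \<forall>x\<in>G. g (b ^ p * x) = b * g x" and "g 1 = 1" and "K > 0"
    and bound: "\<forall>x\<in>G. v (g x) ^ p \<le> K * v x"
    using split by (auto simp: bounded_splitting_on_def)
  have approx: "\<exists>s. (\<forall>n. s n \<in> G) \<and> v_lim s x" for x
    by (rule v_lim_of_approximable[of G x]) (use dense in auto)
  define \<psi> where "\<psi> x = (SOME l. \<forall>s. (\<forall>n. s n \<in> G) \<and> v_lim s x \<longrightarrow> v_lim (\<lambda>n. g (s n)) l)" for x
  have lim: "v_lim (\<lambda>n. g (s n)) (\<psi> x)" if "\<forall>n. s n \<in> G" "v_lim s x" for s x
    using someI_ex[OF bounded_splitting_on_limit[OF assms(1) split that]] that
    unfolding \<psi>_def by blast
  have add: "\<psi> (x + y) = \<psi> x + \<psi> y" for x y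
  proof -
    obtain s t where st: "\<forall>n. s n \<in> G" "v_lim s x" "\<forall>n. t n \<in> G" "v_lim t y"
      using approx by meson
    have "\<forall>n. s n + t n \<in> G" using st(1,3) rp_subspace_add[OF G(1)] by blast
    then have "v_lim (\<lambda>n. g (s n + t n)) (\<psi> (x + y))" by (rule lim[OF _ v_lim_add[OF st(2,4)]])
    moreover have "v_lim (\<lambda>n. g (s n + t n)) (\<psi> x + \<psi> y)"
      using v_lim_add[OF lim[OF st(1,2)] lim[OF st(3,4)]] gadd st(1,3) by simp
    ultimately show ?thesis by (rule v_lim_unique)
  qed
  have smul: "\<psi> (b ^ p * x) = b * \<psi> x" for b x
  proof -
    obtain s where s: "\<forall>n. s n \<in> G" "v_lim s x" using approx by meson
    have "\<forall>n. b ^ p * s n \<in> G" using s(1) rp_subspace_smul[OF G(1)] by blast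
    then have "v_lim (\<lambda>n. g (b ^ p * s n)) (\<psi> (b ^ p * x))" by (rule lim[OF _ v_lim_mult_left[OF s(2)]])
    moreover have "v_lim (\<lambda>n. g (b ^ p * s n)) (b * \<psi> x)"
      using v_lim_mult_left[OF lim[OF s]] gsmul s(1) by simp
    ultimately show ?thesis by (rule v_lim_unique)
  qed
  have "v_lim (\<lambda>n. g 1) (\<psi> 1)" using lim[OF _ v_lim_const] G(2) by blast
  then have "\<psi> 1 = 1" using v_lim_const[of 1] \<open>g 1 = 1\<close> v_lim_unique by simp
  have "v (\<psi> x) ^ p \<le> K * v x" for x
  proof -
    obtain s where s: "\<forall>n. s n \<in> G" "v_lim s x" using approx by meson
    show ?thesis by (rule v_lim_power_bound[OF p_pos \<open>K > 0\<close> _ s(2) lim[OF s]]) (use bound s(1) in simp)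
  qed
  then have "bounded_splitting_on v p UNIV \<psi> K"
    using add smul \<open>\<psi> 1 = 1\<close> \<open>K > 0\<close> by (auto simp: bounded_splitting_on_def rp_subspace_def rp_smul_def)
  then show ?thesis by blast
qed

section \<open>Polar norms\<close>

lemma rp_norm_le_1_iff: "rp_norm v p x \<le> 1 \<longleftrightarrow> v x \<le> 1"
proof
  assume "rp_norm v p x \<le> 1"
  show "v x \<le> 1"
  proof (rule ccontr)
    assume "\<not> v x \<le> 1"
    then have "1 < v x powr (1 / p)" using p_pos by (intro gr_one_powr) auto
    then show False using \<open>rp_norm v p x \<le> 1\<close> by (simp add: rp_norm_def)
  qed
qed (simp add: rp_norm_def powr_le1)

lemma bounded_splitting_if_polar:
  assumes "nontrivial_value_group v" and "rp_polar v p"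
  shows "\<exists>\<psi> K. bounded_splitting_on v p UNIV \<psi> K"
proof -
  obtain a where "v a > 1" using exists_v_gt_1[OF assms(1)] .
  then have "\<not> rp_norm v p (a ^ p) \<le> 1"
    using one_less_power[OF _ p_pos] by (simp add: rp_norm_le_1_iff not_le)
  then obtain f where add: "\<forall>y z. f (y + z) = f y + f z" and lin: "\<forall>b y. f (rp_smul p b y) = b * f y"
    and ball: "\<forall>y. rp_norm v p y \<le> 1 \<longrightarrow> v (f y) \<le> 1" and "v (f (a ^ p)) > 1"
    using assms(2) unfolding rp_polar_def not_le by blast
  have lin: "f (b ^ p * y) = b * f y" for b y using lin by (simp add: rp_smul_def)
  have ball: "v y \<le> 1 \<Longrightarrow> v (f y) \<le> 1" for y using ball by (simp add: rp_norm_le_1_iff)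
  have "f 0 = 0" using add[rule_format, of 0 0] by (metis add_cancel_left_right add_0)
  have "f 1 \<noteq> 0" using lin[of a 1] \<open>v (f (a ^ p)) > 1\<close> by auto
  have bound: "v (f y) ^ p \<le> v a ^ p * v y" for y
  proof (cases "y = 0")
    case False
    obtain c where "c \<noteq> 0" and "v (c ^ p * y) \<le> 1" and "1 \<le> v a ^ p * v (c ^ p * y)"
      using exists_pth_power_scaling[OF \<open>v a > 1\<close> False p_pos] .
    then have "(v c * v (f y)) ^ p \<le> 1" using ball[of "c ^ p * y"] lin by (simp add: power_le_one)
    then have "v (f y) ^ p \<le> 1 / v c ^ p" using \<open>c \<noteq> 0\<close> by (simp add: power_mult_distrib field_simps)
    also have "\<dots> \<le> v a ^ p * v y" using \<open>1 \<le> v a ^ p * v (c ^ p * y)\<close> \<open>c \<noteq> 0\<close> by (simp add: field_simps)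
    finally show ?thesis .
  qed (simp add: \<open>f 0 = 0\<close> p_pos power_0_left)
  define K where "K = v a ^ p / v (f 1) ^ p"
  have "K > 0" using \<open>v a > 1\<close> \<open>f 1 \<noteq> 0\<close> unfolding K_def by (intro divide_pos_pos zero_less_power) auto
  have "bounded_splitting_on v p UNIV (\<lambda>y. f y / f 1) K"
    unfolding bounded_splitting_on_def
  proof (intro conjI ballI allI)
    show "v (f y / f 1) ^ p \<le> K * v y" for y
      using bound[of y] \<open>f 1 \<noteq> 0\<close> by (simp add: K_def power_divide divide_right_mono)
  qed (use add lin \<open>f 1 \<noteq> 0\<close> \<open>K > 0\<close> in \<open>simp_all add: add_divide_distrib rp_subspace_def rp_smul_def\<close>)
  then show ?thesis by blast
qed

end

section \<open>Spherically complete fields\<close>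

lemma exists_decreasing_seq_to_Inf:
  fixes r :: "'i \<Rightarrow> real"
  assumes "I \<noteq> {}" and "\<forall>i\<in>I. 0 \<le> r i" and no_min: "\<forall>i\<in>I. \<exists>j\<in>I. r j < r i"
  obtains J where "\<forall>n. J n \<in> I" and "\<forall>n. r (J (Suc n)) \<le> r (J n)" and "\<forall>i\<in>I. \<exists>n. r (J n) < r i"
proof -
  define \<rho> where "\<rho> = Inf (r ` I)"
  have bdd: "bdd_below (r ` I)" using assms(2) by (intro bdd_belowI[of _ 0]) auto
  have below: "\<rho> < r i" if i: "i \<in> I" for i
  proof -
    obtain j where j: "j \<in> I" "r j < r i" using no_min i by blast
    have "\<rho> \<le> r j" unfolding \<rho>_def by (rule cInf_lower[OF imageI[OF j(1)] bdd])
    with j(2) show ?thesis by linarith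
  qed
  have step: "\<exists>j\<in>I. r j < r i \<and> r j < \<rho> + 1 / Suc n" if "i \<in> I" for i n
  proof -
    have "Inf (r ` I) < min (r i) (\<rho> + 1 / Suc n)" using below[OF that] by (simp add: \<rho>_def)
    then have "\<exists>y\<in>r ` I. y < min (r i) (\<rho> + 1 / Suc n)"
      by (simp only: cInf_less_iff[OF _ bdd] image_is_empty assms(1) not_False_eq_True)
    then obtain j where "j \<in> I" "r j < min (r i) (\<rho> + 1 / Suc n)" by blast
    then show ?thesis by auto
  qed
  obtain j0 where "j0 \<in> I" using assms(1) by blast
  define J where "J = rec_nat j0 (\<lambda>n j. SOME j'. j' \<in> I \<and> r j' < r j \<and> r j' < \<rho> + 1 / Suc n)"
  have J: "J n \<in> I \<and> r (J (Suc n)) < r (J n) \<and> r (J (Suc n)) < \<rho> + 1 / Suc n" for n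
  proof (induction n)
    case 0
    show ?case using someI_ex[OF step[OF \<open>j0 \<in> I\<close>, of 0, unfolded Bex_def]] \<open>j0 \<in> I\<close> by (simp add: J_def)
  next
    case (Suc n)
    then have "J (Suc n) \<in> I" using someI_ex[OF step[of "J n" n, unfolded Bex_def]] by (simp add: J_def)
    then show ?case
      using someI_ex[OF step[of "J (Suc n)" "Suc n", unfolded Bex_def]] by (simp add: J_def)
  qed
  have "\<exists>n. r (J n) < r i" if i: "i \<in> I" for i
  proof -
    obtain n where "1 / Suc n < r i - \<rho>"
      using below[OF i] by (metis diff_gt_0_iff_gt inverse_eq_divide of_nat_Suc reals_Archimedean)
    then show ?thesis using J[of n] by (intro exI[of _ "Suc n"]) simp
  qed
  moreover have "\<forall>n. J n \<in> I" and "\<forall>n. r (J (Suc n)) \<le> r (J n)" using J by (simp_all add: less_imp_le)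
  ultimately show thesis using that by blast
qed

context nonarch_field
begin

lemma spherically_complete_disk_family:
  assumes "spherically_complete v" and "I \<noteq> {}" and "\<forall>i\<in>I. r i > 0"
    and pairwise: "\<forall>i\<in>I. \<forall>j\<in>I. v (c i - c j) \<le> max (r i) (r j)"
  obtains s where "\<forall>i\<in>I. v (s - c i) \<le> r i"
proof (cases "\<exists>i\<in>I. \<forall>j\<in>I. r i \<le> r j")
  case True
  then obtain i where i: "i \<in> I" "\<forall>j\<in>I. r i \<le> r j" by blast
  have "v (c i - c j) \<le> r j" if j: "j \<in> I" for j
  proof -
    have "v (c i - c j) \<le> max (r i) (r j)" using pairwise i(1) j by blast
    then show ?thesis using i(2) j by (simp add: max.absorb2)
  qed
  then show thesis using that[of "c i"] by blast
next
  case False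
  then have "\<forall>i\<in>I. \<exists>j\<in>I. r j < r i" by (auto simp: not_le)
  moreover have "\<forall>i\<in>I. 0 \<le> r i" using assms(3) by (simp add: less_imp_le)
  ultimately obtain J where J: "\<forall>n. J n \<in> I" "\<forall>n. r (J (Suc n)) \<le> r (J n)" "\<forall>i\<in>I. \<exists>n. r (J n) < r i"
    using exists_decreasing_seq_to_Inf[OF assms(2)] by blast
  have "closed_disk v (c (J (Suc n))) (r (J (Suc n))) \<subseteq> closed_disk v (c (J n)) (r (J n))" for n
  proof
    fix x assume "x \<in> closed_disk v (c (J (Suc n))) (r (J (Suc n)))"
    moreover have "v (c (J (Suc n)) - c (J n)) \<le> max (r (J (Suc n))) (r (J n))" using pairwise J(1) by blast
    ultimately show "x \<in> closed_disk v (c (J n)) (r (J n))"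
      using v_diff_triangle[of x "c (J n)" "c (J (Suc n))"] J(2)[rule_format, of n]
      by (simp add: closed_disk_def max.absorb2)
  qed
  moreover have "\<forall>n. r (J n) > 0" using J(1) assms(3) by blast
  ultimately have "(\<Inter>n. closed_disk v (c (J n)) (r (J n))) \<noteq> {}"
    by (intro assms(1)[unfolded spherically_complete_def, rule_format] conjI allI) blast+
  then obtain s where s: "\<forall>n. v (s - c (J n)) \<le> r (J n)" by (auto simp: closed_disk_def)
  have "v (s - c i) \<le> r i" if i: "i \<in> I" for i
  proof -
    obtain n where "r (J n) < r i" using J(3) i by blast
    moreover have "v (c (J n) - c i) \<le> max (r (J n)) (r i)" using pairwise J(1) i by blast
    ultimately show ?thesis using s[rule_format, of n] v_diff_triangle[of s "c i" "c (J n)"] by simp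
  qed
  then show thesis using that by blast
qed

end

context nonarch_field_char
begin

lemma exists_maximal_far_from_one:
  assumes "\<gamma> \<le> 1"
  obtains M where "rp_subspace p M" and "far_from_one \<gamma> M"
    and "\<forall>X. rp_subspace p X \<and> far_from_one \<gamma> X \<and> M \<subseteq> X \<longrightarrow> X = M"
proof -
  define A where "A = {H. rp_subspace p H \<and> far_from_one \<gamma> H}"
  have "\<exists>U\<in>A. \<forall>X\<in>C. X \<subseteq> U" if "C \<in> chains A" for C
  proof (cases "C = {}")
    case True
    have "{0} \<in> A" using assms by (simp add: A_def rp_subspace_def rp_smul_def far_from_one_def)
    then show ?thesis using True by blast
  next
    case False
    have "C \<subseteq> A" and "chain\<^sub>\<subseteq> C" using that by (simp_all add: chains_def)
    then have "\<Union>C \<in> A"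
      using rp_subspace_Union_chain[OF False] by (auto simp: A_def far_from_one_def)
    then show ?thesis by blast
  qed
  then obtain M where "M \<in> A" "\<forall>X\<in>A. M \<subseteq> X \<longrightarrow> X = M" using Zorn_Lemma2[of A] by blast
  then show thesis by (intro that) (auto simp: A_def)
qed

text \<open>The disks centred at \<open>u\<close> of radius \<open>|u^p - x - h|^{1/p}\<close>, \<open>h \<in> M\<close>, pairwise intersect;
  a common point \<open>s\<close> is a best approximation of \<open>x\<close> by \<open>s^p\<close> modulo \<open>M\<close>.\<close>
lemma exists_center_if_spherically_complete:
  assumes "spherically_complete v" and M: "rp_subspace p M" "far_from_one 1 M"
    and "x \<notin> kp_sum p M"
  obtains s where "\<forall>u. \<forall>h\<in>M. v (s - u) ^ p \<le> v (u ^ p - x - h)"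
proof -
  define R where "R = (\<lambda>(u, h). root p (v (u ^ p - x - h)))"
  have R: "R (u, h) ^ p = v (u ^ p - x - h)" for u h
    using p_pos by (simp add: R_def)
  have "u ^ p - x - h \<noteq> 0" if "h \<in> M" for u h
  proof
    assume "u ^ p - x - h = 0"
    then have "x = u ^ p + - h" by (simp add: algebra_simps)
    then show False using assms(4) rp_subspace_uminus[OF M(1) that CHAR_eq prime_p]
      by (auto simp: kp_sum_def)
  qed
  then have R_pos: "\<forall>i\<in>UNIV \<times> M. R i > 0" using p_pos by (auto simp: R_def)
  have pairwise: "v (u - u') \<le> max (R (u, h)) (R (u', h'))" if "h \<in> M" "h' \<in> M" for u u' h h'
  proof -
    have pos: "R (u, h) > 0" "R (u', h') > 0" using R_pos that by auto
    have "v (u - u') ^ p \<le> v ((u - u') ^ p - (h - h'))"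
      using far_from_one_scaled[OF M, of "h - h'"] rp_subspace_diff[OF M(1) that CHAR_eq prime_p] by simp
    also have "(u - u') ^ p - (h - h') = (u ^ p - x - h) - (u' ^ p - x - h')"
      using diff_power_CHAR[OF CHAR_eq prime_p, of u u'] by simp
    also have "v \<dots> \<le> max (R (u, h) ^ p) (R (u', h') ^ p)"
      unfolding R by (rule v_diff_le_max)
    also have "\<dots> \<le> max (R (u, h)) (R (u', h')) ^ p"
      using pos power_mono[of "R (u, h)" "max (R (u, h)) (R (u', h'))" p]
        power_mono[of "R (u', h')" "max (R (u, h)) (R (u', h'))" p] by simp
    finally show ?thesis using pos p_pos by (simp add: power_mono_iff)
  qed
  have "UNIV \<times> M \<noteq> {}" using rp_subspace_zero[OF M(1)] by blast
  moreover have "\<forall>i\<in>UNIV \<times> M. \<forall>j\<in>UNIV \<times> M. v (fst i - fst j) \<le> max (R i) (R j)"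
    using pairwise by auto
  ultimately obtain s where "\<forall>i\<in>UNIV \<times> M. v (s - fst i) \<le> R i"
    by (rule spherically_complete_disk_family[OF assms(1) _ R_pos, of fst])
  then have "v (s - u) ^ p \<le> v (u ^ p - x - h)" if "h \<in> M" for u h
    using that power_mono[of "v (s - u)" "R (u, h)" p] R by fastforce
  then show thesis using that by blast
qed

lemma far_from_one_adjoin_center:
  assumes M: "rp_subspace p M" "far_from_one 1 M"
    and s: "\<forall>u. \<forall>h\<in>M. v (s - u) ^ p \<le> v (u ^ p - x - h)"
  shows "far_from_one 1 (rp_adjoin p M (x - s ^ p))"
  unfolding far_from_one_def rp_adjoin_def
proof safe
  fix h b assume "h \<in> M"
  show "1 \<le> v (1 - (h + b ^ p * (x - s ^ p)))"
  proof (cases "b = 0")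
    case True
    then show ?thesis using M(2) \<open>h \<in> M\<close> p_pos by (simp add: far_from_one_def power_0_left)
  next
    case False
    define u where "u = inverse b + s"
    have "inverse b ^ p * h \<in> M" by (rule rp_subspace_smul[OF M(1) \<open>h \<in> M\<close>])
    then have "v (s - u) ^ p \<le> v (u ^ p - x - inverse b ^ p * h)" using s by blast
    then have le: "inverse (v b) ^ p \<le> v (u ^ p - x - inverse b ^ p * h)"
      by (simp add: u_def)
    have "1 - (h + b ^ p * (x - s ^ p)) = b ^ p * (u ^ p - x - inverse b ^ p * h)"
      using False add_power_CHAR[OF CHAR_eq prime_p, of "inverse b" s]
      by (simp add: u_def field_simps power_inverse)
    moreover have "v b ^ p * inverse (v b) ^ p = 1"
      using False by (simp flip: power_mult_distrib)
    ultimately show ?thesis using mult_left_mono[OF le, of "v b ^ p"] by simp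
  qed
qed

lemma kp_sum_eq_UNIV_if_spherically_complete:
  assumes "spherically_complete v" and M: "rp_subspace p M" "far_from_one 1 M"
    and maximal: "\<forall>X. rp_subspace p X \<and> far_from_one 1 X \<and> M \<subseteq> X \<longrightarrow> X = M"
  shows "kp_sum p M = UNIV"
proof (rule ccontr)
  assume "kp_sum p M \<noteq> UNIV"
  then obtain x where "x \<notin> kp_sum p M" by blast
  then obtain s where "\<forall>u. \<forall>h\<in>M. v (s - u) ^ p \<le> v (u ^ p - x - h)"
    using exists_center_if_spherically_complete[OF assms(1) M] by blast
  then have "rp_adjoin p M (x - s ^ p) = M"
    using maximal far_from_one_adjoin_center[OF M] rp_subspace_rp_adjoin[OF M(1) CHAR_eq prime_p]
      subset_rp_adjoin[OF p_pos] by blast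
  then have "x - s ^ p \<in> M" using mem_rp_adjoin[OF M(1)] by metis
  then have "x \<in> kp_sum p M" unfolding kp_sum_def by force
  with \<open>x \<notin> kp_sum p M\<close> show False ..
qed

lemma bounded_splitting_if_spherically_complete:
  assumes "spherically_complete v"
  shows "\<exists>\<psi> K. bounded_splitting_on v p UNIV \<psi> K"
proof -
  obtain M where M: "rp_subspace p M" "far_from_one 1 M"
    and "\<forall>X. rp_subspace p X \<and> far_from_one 1 X \<and> M \<subseteq> X \<longrightarrow> X = M"
    using exists_maximal_far_from_one[of 1] by auto
  then have "kp_sum p M = UNIV" by (rule kp_sum_eq_UNIV_if_spherically_complete[OF assms])
  then show ?thesis using bounded_splitting_on_kp_sum[OF M] by fastforce
qed

section \<open>Dense subspaces with a countable basis\<close>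

lemma v_closed_dist_pos:
  assumes "v_closed S" and "b \<notin> S" and "S \<noteq> {}"
  obtains d where "d > 0" and "\<forall>y\<in>S. d \<le> v (b - y)" and "\<forall>t>d. \<exists>y\<in>S. v (b - y) < t"
proof -
  define d where "d = Inf ((\<lambda>y. v (b - y)) ` S)"
  have bdd: "bdd_below ((\<lambda>y. v (b - y)) ` S)" by (intro bdd_belowI[of _ 0]) auto
  have lower: "\<forall>y\<in>S. d \<le> v (b - y)" unfolding d_def using bdd by (simp add: cInf_lower)
  have near: "\<forall>t>d. \<exists>y\<in>S. v (b - y) < t"
    unfolding d_def using cInf_less_iff[OF _ bdd] assms(3) by simp
  have "d \<noteq> 0"
  proof
    assume "d = 0"
    then obtain s where "\<forall>n. s n \<in> S" and "v_lim s b"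
      using v_lim_of_approximable[of S b] near by blast
    then show False using assms(1,2) unfolding v_closed_def by blast
  qed
  moreover have "d \<ge> 0" unfolding d_def using assms(3) by (intro cInf_greatest) auto
  ultimately show thesis using that[of d] lower near by simp
qed

lemma dist_rp_adjoin_scaled:
  assumes S: "rp_subspace p S" and dist: "\<forall>w\<in>S. d \<le> v (e - w)" and "w \<in> S"
  shows "v a ^ p * d \<le> v (w + a ^ p * e)"
proof (cases "a = 0")
  case False
  have "- (inverse a ^ p * w) \<in> S"
    using rp_subspace_uminus[OF S rp_subspace_smul[OF S \<open>w \<in> S\<close>] CHAR_eq prime_p] .
  then have "d \<le> v (e - - (inverse a ^ p * w))" using dist by blast
  moreover have "w + a ^ p * e = a ^ p * (e - - (inverse a ^ p * w))"
    using False by (simp add: field_simps power_inverse)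
  ultimately show ?thesis by (simp add: mult_left_mono)
qed (use p_pos in \<open>simp add: power_0_left\<close>)

lemma v_closed_rp_adjoin:
  assumes "abs_complete v" and S: "rp_subspace p S" "v_closed S"
    and "d > 0" and dist: "\<forall>w\<in>S. d \<le> v (e - w)"
  shows "v_closed (rp_adjoin p S e)"
  unfolding v_closed_def
proof safe
  fix z s assume "\<forall>n. s n \<in> rp_adjoin p S e" and lim: "v_lim s z"
  then obtain w a where wa: "\<forall>n. w n \<in> S \<and> s n = w n + a n ^ p * e"
    unfolding rp_adjoin_def by simp metis
  have "v_Cauchy a"
  proof (rule v_Cauchy_if_power_bounded[OF p_pos, of "1 / d"])
    show "\<forall>m n. v (a m - a n) ^ p \<le> 1 / d * v (s m - s n)"
    proof (intro allI)
      fix m n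
      have "s m - s n = (w m - w n) + (a m - a n) ^ p * e"
        using wa by (simp add: diff_power_CHAR[OF CHAR_eq prime_p] algebra_simps)
      moreover have "v (a m - a n) ^ p * d \<le> v ((w m - w n) + (a m - a n) ^ p * e)"
        using dist_rp_adjoin_scaled[OF S(1) dist rp_subspace_diff[OF S(1) _ _ CHAR_eq prime_p]] wa
        by blast
      ultimately have "v (a m - a n) ^ p * d \<le> v (s m - s n)" by simp
      then show "v (a m - a n) ^ p \<le> 1 / d * v (s m - s n)" using \<open>d > 0\<close> by (simp add: field_simps)
    qed
  qed (use \<open>d > 0\<close> v_lim_imp_Cauchy[OF lim] in simp_all)
  then obtain a0 where "v_lim a a0" using v_Cauchy_convergent[OF assms(1)] by blast
  then have "v_lim (\<lambda>n. (a n - a0) ^ p) 0" using v_lim_power_zero[OF p_pos] v_lim_iff_diff by blast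
  then have "v_lim (\<lambda>n. e * (a n - a0) ^ p) 0" using v_lim_mult_left by fastforce
  then have "v_lim (\<lambda>n. a n ^ p * e) (a0 ^ p * e)"
    by (subst v_lim_iff_diff) (simp add: diff_power_CHAR[OF CHAR_eq prime_p] algebra_simps)
  from v_lim_diff[OF lim this] have "v_lim w (z - a0 ^ p * e)" using wa by simp
  then have "z - a0 ^ p * e \<in> S" using S(2) wa unfolding v_closed_def by blast
  then show "z \<in> rp_adjoin p S e" unfolding rp_adjoin_def by force
qed

text \<open>Adjoining the error \<open>b - y\<^sub>0\<close> of an almost best approximation \<open>y\<^sub>0 \<in> k^p + H\<close> of \<open>b\<close>
  costs only the factor \<open>\<tau>\<close> in the distance from 1.\<close>
lemma far_from_one_rp_adjoin_near:
  assumes H: "rp_subspace p H" "far_from_one \<gamma> H" "0 \<le> \<gamma>" and "0 < \<tau>" "\<tau> \<le> 1"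
    and "y\<^sub>0 \<in> kp_sum p H" and dist: "\<forall>y\<in>kp_sum p H. d \<le> v (b - y)" and "v (b - y\<^sub>0) \<le> d / \<tau>"
  shows "far_from_one (\<tau> * \<gamma>) (rp_adjoin p H (b - y\<^sub>0))"
  unfolding far_from_one_def rp_adjoin_def
proof safe
  fix h c assume "h \<in> H"
  show "\<tau> * \<gamma> \<le> v (1 - (h + c ^ p * (b - y\<^sub>0)))"
  proof (cases "c = 0")
    case True
    have "\<tau> * \<gamma> \<le> \<gamma>" using \<open>\<tau> \<le> 1\<close> H(3) mult_right_mono[of \<tau> 1 \<gamma>] by simp
    also have "\<gamma> \<le> v (1 - h)" using H(2) \<open>h \<in> H\<close> by (simp add: far_from_one_def)
    finally show ?thesis using True p_pos by (simp add: power_0_left)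
  next
    case False
    define t where "t = inverse c"
    define y\<^sub>1 where "y\<^sub>1 = t ^ p - t ^ p * h + y\<^sub>0"
    have "t ^ p * h \<in> H" using rp_subspace_smul[OF H(1) \<open>h \<in> H\<close>] .
    then have "- (t ^ p * h) \<in> H" using rp_subspace_uminus[OF H(1) _ CHAR_eq prime_p] by blast
    then have "t ^ p + - (t ^ p * h) \<in> kp_sum p H" unfolding kp_sum_def by blast
    then have "y\<^sub>1 \<in> kp_sum p H"
      using rp_subspace_add[OF rp_subspace_kp_sum[OF H(1) CHAR_eq prime_p] _ \<open>y\<^sub>0 \<in> kp_sum p H\<close>]
      by (simp add: y\<^sub>1_def)
    then have "d \<le> v (b - y\<^sub>1)" using dist by blast
    have "\<gamma> * v t ^ p \<le> v (t ^ p - t ^ p * h)"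
      by (rule far_from_one_scaled[OF H(1,2,3) \<open>t ^ p * h \<in> H\<close>])
    also have "t ^ p - t ^ p * h = (y\<^sub>1 - b) + (b - y\<^sub>0)" by (simp add: y\<^sub>1_def)
    also have "v \<dots> \<le> max (v (b - y\<^sub>1)) (d / \<tau>)"
      using v_add_le_max[of "y\<^sub>1 - b" "b - y\<^sub>0"] \<open>v (b - y\<^sub>0) \<le> d / \<tau>\<close> by (simp add: v_diff_commute)
    also have "\<dots> \<le> v (b - y\<^sub>1) / \<tau>"
    proof -
      have "v (b - y\<^sub>1) \<le> v (b - y\<^sub>1) / \<tau>"
        using \<open>0 < \<tau>\<close> \<open>\<tau> \<le> 1\<close> mult_left_mono[of \<tau> 1 "v (b - y\<^sub>1)"] by (simp add: le_divide_eq)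
      moreover have "d / \<tau> \<le> v (b - y\<^sub>1) / \<tau>"
        using \<open>d \<le> v (b - y\<^sub>1)\<close> \<open>0 < \<tau>\<close> by (simp add: divide_right_mono)
      ultimately show ?thesis by simp
    qed
    finally have "\<tau> * \<gamma> * v t ^ p \<le> v (b - y\<^sub>1)" using \<open>0 < \<tau>\<close> by (simp add: field_simps)
    then have "v c ^ p * (\<tau> * \<gamma> * v t ^ p) \<le> v c ^ p * v (b - y\<^sub>1)" by (simp add: mult_left_mono)
    moreover have "v c ^ p * v t ^ p = 1" using False by (simp add: t_def flip: power_mult_distrib)
    moreover have "1 - (h + c ^ p * (b - y\<^sub>0)) = c ^ p * (y\<^sub>1 - b)"
      using False by (simp add: y\<^sub>1_def t_def field_simps power_inverse)
    ultimately show ?thesis by (simp add: v_diff_commute[of y\<^sub>1] mult_ac)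
  qed
qed

text \<open>The distance of 1 from the \<open>n\<close>-th subspace of the construction is at least \<open>sep_bound n\<close>;
  these bounds decrease from 1 to \<open>1/2\<close>.\<close>
definition sep_bound :: "nat \<Rightarrow> real" where
  "sep_bound n = 1 / 2 + (1 / 2) ^ Suc n"

lemma sep_bound_gt_half: "1 / 2 < sep_bound n"
  by (simp add: sep_bound_def)

text \<open>\<open>k^p + H\<close> is kept closed so that a basis vector outside it has positive distance from it.\<close>
definition approx_stage :: "(nat \<Rightarrow> 'a) \<Rightarrow> nat \<Rightarrow> 'a set \<Rightarrow> bool" where
  "approx_stage b n H \<longleftrightarrow> rp_subspace p H \<and> far_from_one (sep_bound n) H \<and>
     v_closed (kp_sum p H) \<and> (\<forall>m<n. b m \<in> kp_sum p H)"

lemma approx_stage_0: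
  assumes "abs_complete v"
  shows "approx_stage b 0 {0}"
proof -
  have "rp_subspace p {0}" by (simp add: rp_subspace_def rp_smul_def)
  moreover have "v_closed {0}"
    unfolding v_closed_def
  proof safe
    fix s l assume "\<forall>n. s n \<in> {0}" and "v_lim s l"
    then have "s = (\<lambda>n. 0)" by auto
    with \<open>v_lim s l\<close> have "v_lim (\<lambda>n. 0) l" by simp
    then show "l = 0" using v_lim_unique[OF _ v_lim_const] by blast
  qed
  ultimately have "v_closed (kp_sum p {0})"
    unfolding kp_sum_zero by (rule v_closed_rp_adjoin[OF assms, of _ 1]) simp_all
  then show ?thesis by (simp add: approx_stage_def sep_bound_def far_from_one_def rp_subspace_def rp_smul_def)
qed

lemma approx_stage_Suc:
  assumes "abs_complete v" and stage: "approx_stage b n H"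
  shows "\<exists>H'. approx_stage b (Suc n) H' \<and> H \<subseteq> H'"
proof -
  have H: "rp_subspace p H" "far_from_one (sep_bound n) H" "v_closed (kp_sum p H)"
    and prev: "\<forall>m<n. b m \<in> kp_sum p H" using stage by (simp_all add: approx_stage_def)
  have sep: "0 < sep_bound (Suc n)" "sep_bound (Suc n) < sep_bound n"
    using sep_bound_gt_half[of "Suc n"] by (linarith, simp add: sep_bound_def)
  define S where "S = kp_sum p H"
  have S: "rp_subspace p S" using rp_subspace_kp_sum[OF H(1) CHAR_eq prime_p] by (simp add: S_def)
  show ?thesis
  proof (cases "b n \<in> S")
    case True
    then have "approx_stage b (Suc n) H"
      using stage far_from_one_mono[OF H(2)] sep
      by (auto simp: approx_stage_def S_def less_Suc_eq)
    then show ?thesis by blast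
  next
    case False
    obtain d where "d > 0" and dist: "\<forall>y\<in>S. d \<le> v (b n - y)" and near: "\<forall>t>d. \<exists>y\<in>S. v (b n - y) < t"
      using v_closed_dist_pos[OF H(3)[folded S_def] False] rp_subspace_zero[OF S] by blast
    define \<tau> where "\<tau> = sep_bound (Suc n) / sep_bound n"
    have "0 < \<tau>" "\<tau> < 1" using sep by (simp_all add: \<tau>_def)
    then have "d < d / \<tau>" using \<open>d > 0\<close> by (simp add: less_divide_eq)
    then obtain y\<^sub>0 where "y\<^sub>0 \<in> S" "v (b n - y\<^sub>0) < d / \<tau>" using near by blast
    define e where "e = b n - y\<^sub>0"
    define H' where "H' = rp_adjoin p H e"
    have "kp_sum p H' = rp_adjoin p S e" by (simp add: H'_def S_def kp_sum_rp_adjoin)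
    moreover have "\<forall>w\<in>S. d \<le> v (e - w)"
      using dist rp_subspace_add[OF S \<open>y\<^sub>0 \<in> S\<close>] by (simp add: e_def diff_diff_eq)
    ultimately have "v_closed (kp_sum p H')"
      using v_closed_rp_adjoin[OF assms(1) S H(3)[folded S_def] \<open>d > 0\<close>] by simp
    moreover have "far_from_one (sep_bound (Suc n)) H'"
      using far_from_one_rp_adjoin_near[OF H(1,2) _ \<open>0 < \<tau>\<close> _ \<open>y\<^sub>0 \<in> S\<close>[unfolded S_def]
          dist[unfolded S_def]] \<open>v (b n - y\<^sub>0) < d / \<tau>\<close> sep
      by (simp add: H'_def e_def \<tau>_def)
    moreover have "H \<subseteq> H'" by (simp add: H'_def subset_rp_adjoin[OF p_pos])
    moreover have "b n \<in> kp_sum p H'"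
      using \<open>kp_sum p H' = rp_adjoin p S e\<close> \<open>y\<^sub>0 \<in> S\<close> unfolding rp_adjoin_def e_def
      by (force intro: exI[of _ 1])
    moreover have "\<forall>m<n. b m \<in> kp_sum p H'" using prev kp_sum_mono[OF \<open>H \<subseteq> H'\<close>] by blast
    ultimately have "approx_stage b (Suc n) H'"
      using rp_subspace_rp_adjoin[OF H(1) CHAR_eq prime_p] by (auto simp: approx_stage_def H'_def less_Suc_eq)
    then show ?thesis using \<open>H \<subseteq> H'\<close> by blast
  qed
qed

lemma exists_approx_chain:
  assumes "abs_complete v"
  obtains Hs where "\<forall>n. approx_stage b n (Hs n)" and "mono Hs"
proof -
  define Hs where "Hs = rec_nat {0} (\<lambda>n H. SOME H'. approx_stage b (Suc n) H' \<and> H \<subseteq> H')"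
  have step: "approx_stage b (Suc n) (Hs (Suc n)) \<and> Hs n \<subseteq> Hs (Suc n)"
    if "approx_stage b n (Hs n)" for n
    using someI_ex[OF approx_stage_Suc[OF assms that]] by (simp add: Hs_def)
  have stages: "approx_stage b n (Hs n)" for n
  proof (induction n)
    case 0
    show ?case using approx_stage_0[OF assms] by (simp add: Hs_def)
  next
    case (Suc n)
    then show ?case using step by blast
  qed
  moreover have "mono Hs" unfolding mono_iff_le_Suc using step stages by blast
  ultimately show thesis using that by blast
qed

lemma approx_chain_Union:
  assumes Hs: "\<forall>n. approx_stage b n (Hs n)" and "mono Hs"
  shows "rp_subspace p (\<Union>n. Hs n)" and "far_from_one (1 / 2) (\<Union>n. Hs n)"
    and "b n \<in> kp_sum p (\<Union>n. Hs n)"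
proof -
  have "Hs m \<subseteq> Hs n \<or> Hs n \<subseteq> Hs m" for m n
    using monoD[OF \<open>mono Hs\<close>, of m n] monoD[OF \<open>mono Hs\<close>, of n m] by (cases "m \<le> n") auto
  then have "chain\<^sub>\<subseteq> (range Hs)" by (auto simp: chain_subset_def)
  then show "rp_subspace p (\<Union>n. Hs n)"
    using rp_subspace_Union_chain[of "range Hs"] Hs by (simp add: approx_stage_def)
  show "far_from_one (1 / 2) (\<Union>n. Hs n)"
    unfolding far_from_one_def
  proof safe
    fix h n assume "h \<in> Hs n"
    then have "sep_bound n \<le> v (1 - h)" using Hs by (auto simp: approx_stage_def far_from_one_def)
    then show "1 / 2 \<le> v (1 - h)" using sep_bound_gt_half[of n] by linarith
  qed
  show "b n \<in> kp_sum p (\<Union>n. Hs n)"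
    using Hs[rule_format, of "Suc n"] kp_sum_mono[of "Hs (Suc n)" "\<Union>n. Hs n" p]
    by (auto simp: approx_stage_def)
qed

lemma bounded_splitting_if_dense_countable_basis:
  assumes "abs_complete v" and "rp_dense_countable_basis v p"
  shows "\<exists>\<psi> K. bounded_splitting_on v p UNIV \<psi> K"
proof -
  obtain V B where V: "rp_dense v p V" "rp_basis p V B" "countable B"
    using assms(2) unfolding rp_dense_countable_basis_def by blast
  define b where "b n = (if B = {} then 0 else from_nat_into B n)" for n
  obtain Hs where Hs: "\<forall>n. approx_stage b n (Hs n)" and "mono Hs"
    using exists_approx_chain[OF assms(1)] by blast
  define H where "H = (\<Union>n. Hs n)"
  have "rp_subspace p H" "far_from_one (1 / 2) H" and b_mem: "\<And>n. b n \<in> kp_sum p H"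
    using approx_chain_Union[OF Hs \<open>mono Hs\<close>] by (simp_all add: H_def)
  have "B \<subseteq> kp_sum p H"
  proof
    fix x assume "x \<in> B"
    then obtain n where "from_nat_into B n = x" using from_nat_into_surj[OF V(3)] by blast
    then show "x \<in> kp_sum p H" using \<open>x \<in> B\<close> b_mem[of n] by (auto simp: b_def split: if_splits)
  qed
  then have "V \<subseteq> kp_sum p H"
    using rp_basis_subset[OF rp_subspace_kp_sum[OF \<open>rp_subspace p H\<close> CHAR_eq prime_p] _ V(2)] by blast
  have dense: "\<forall>x. \<forall>e>0. \<exists>y\<in>kp_sum p H. v (x - y) < e"
  proof (intro allI impI)
    fix x and e :: real assume "e > 0"
    then obtain y where "y \<in> V" "v (x - y) < e" by (rule rp_dense_approx[OF p_pos V(1)])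
    then show "\<exists>y\<in>kp_sum p H. v (x - y) < e" using \<open>V \<subseteq> kp_sum p H\<close> by blast
  qed
  obtain g where "bounded_splitting_on v p (kp_sum p H) g 2"
    using bounded_splitting_on_kp_sum[OF \<open>rp_subspace p H\<close> \<open>far_from_one (1 / 2) H\<close>] by auto
  then show ?thesis using bounded_splitting_extend[OF assms(1) _ dense] by blast
qed

end

theorem mainTheorem6:
  fixes v :: "'a::field \<Rightarrow> real" and p :: nat
  assumes "nonarch_abs v" and "abs_complete v"
    and "CHAR('a) = p" and "p > 0"
    and "nontrivial_value_group v"
    and "spherically_complete v \<or> rp_dense_countable_basis v p \<or>
         (\<not> discrete_value_group v \<and> rp_polar v p)"
  shows "conv_ps_frobenius_split v p TYPE('n::finite)"
proof -
  have "prime p" using prime_CHAR_semidom[where 'a='a] assms(3,4) by simp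
  interpret nonarch_field_char v p
    by unfold_locales (use assms(1,3) \<open>prime p\<close> in simp_all)
  obtain \<psi> K where "bounded_splitting_on v p UNIV \<psi> K"
    using assms(6) bounded_splitting_if_spherically_complete
      bounded_splitting_if_dense_countable_basis[OF assms(2)]
      bounded_splitting_if_polar[OF assms(5)] by blast
  then show ?thesis by (rule conv_ps_frobenius_split_if_bounded_splitting)
qed

end
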